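(* Fix $\mu\in(0,\mu_0]$ and suppose there are constants $p\ge0$, $\rho>0$ with $|f(\xi)-f'(0)\xi|\le p|\xi|^2$ for all $|\xi|\le\rho$, and that $\mu\sup_{t\ge0}|\Delta\tilde\varphi(t)|<\frac{1}{8h_{\max}(\mu)}$ and $\mu(|\Delta\tilde\beta|\mu+|\Delta\alpha|)<\frac{1}{8h_{\max}(\mu)}$. Then the zero solution of $$\bar y''+(\alpha+\Delta\alpha)\mu\bar y'+\big((\beta+\Delta\beta)\mu^2+\mu(\varphi(t)+\Delta\varphi(t))\big)f(\bar y)=0$$ is asymptotically stable.
   Context: Let $T>0$, $\alpha>0$, $\beta>0$ be constants, $\varphi:\mathbb{R}\to\mathbb{R}$ a continuous $T$-periodic function with $\int_0^T\varphi(s)\,ds=0$, and $f:\mathbb{R}\to\mathbb{R}$ a smooth function with $f(0)=0$ and $f'(0)<0$. Put $\tilde\beta=\beta f'(0)$, $\tilde\varphi(t)=\varphi(t)f'(0)$, and assume $$\frac{1}{T}\int_0^T\Big(\int_0^\tau\tilde\varphi(s)\,ds\Big)^2d\tau>\Big(\frac{1}{T}\int_0^T\tau\,\tilde\varphi(\tau)\,d\tau\Big)^2-\tilde\beta .$$ For $\mu>0$ let $\tilde A(t,\mu)=\begin{pmatrix}0&1\\-\tilde\beta\mu^2-\mu\tilde\varphi(t)&-\alpha\mu\end{pmatrix}$. Let $\mu_0>0$ be a number such that the zero solution of the linear equation $y''+\alpha\mu y'+(\tilde\beta\mu^2+\mu\tilde\varphi(t))y=0$ is asymptotically stable for every $\mu\in(0,\mu_0]$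 (such a number exists). For fixed $\mu\in(0,\mu_0]$ let $H(t,\mu)$ be a Hermitian solution of $\frac{d}{dt}H+H\tilde A(t,\mu)+\tilde A^*(t,\mu)H=-I$ on $[0,T]$ with $H(0,\mu)=H(T,\mu)>0$, extended $T$-periodically to $[0,\infty)$; $h_{\max}(\mu)=\max_{0\le t\le T}\|H(t,\mu)\|$. The perturbations are real constants $\Delta\alpha,\Delta\beta$ and a bounded continuous function $\Delta\varphi$ on $[0,\infty)$; set $\Delta\tilde\beta=\Delta\beta\,f'(0)$, $\Delta\tilde\varphi(t)=\Delta\varphi(t)f'(0)$. $\|\cdot\|$ is the Euclidean norm / spectral matrix norm. Asymptotic stability is in the Lyapunov sense for the equivalent first-order system in $(\bar y,\bar y')$. *)

theory Defs
  imports "HOL-Analysis.Analysis"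
begin

definition is_solution_on ::
  "(real \<Rightarrow> real \<times> real \<Rightarrow> real \<times> real) \<Rightarrow> real set \<Rightarrow> (real \<Rightarrow> real \<times> real) \<Rightarrow> bool" where
  "is_solution_on F S x \<longleftrightarrow>
     (\<forall>t\<in>S. (x has_vector_derivative F t (x t)) (at t within S))"

definition lyap_stable :: "(real \<Rightarrow> real \<times> real \<Rightarrow> real \<times> real) \<Rightarrow> bool" where
  "lyap_stable F \<longleftrightarrow>
     (\<forall>\<epsilon>>0. \<forall>t0\<ge>0. \<exists>\<delta>>0. \<forall>x0. norm x0 < \<delta> \<longrightarrow>
        (\<exists>x. is_solution_on F {t0..} x \<and> x t0 = x0) \<and>
        (\<forall>b x. t0 \<le> b \<longrightarrow> is_solution_on F {t0..b} x \<longrightarrow> x t0 = x0 \<longrightarrow>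
               (\<forall>t\<in>{t0..b}. norm (x t) < \<epsilon>)))"

definition lyap_attractive :: "(real \<Rightarrow> real \<times> real \<Rightarrow> real \<times> real) \<Rightarrow> bool" where
  "lyap_attractive F \<longleftrightarrow>
     (\<forall>t0\<ge>0. \<exists>\<delta>>0. \<forall>x. is_solution_on F {t0..} x \<longrightarrow> norm (x t0) < \<delta> \<longrightarrow>
        (x \<longlongrightarrow> 0) at_top)"

definition asymp_stable :: "(real \<Rightarrow> real \<times> real \<Rightarrow> real \<times> real) \<Rightarrow> bool" where
  "asymp_stable F \<longleftrightarrow> lyap_stable F \<and> lyap_attractive F"

text \<open>The system for y'' + a y' + g(t) k(y) = 0.\<close>
definition second_order_sys ::
  "real \<Rightarrow> (real \<Rightarrow> real) \<Rightarrow> (real \<Rightarrow> real) \<Rightarrow> real \<Rightarrow> real \<times> real \<Rightarrow> real \<times> real" where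
  "second_order_sys a g k t z = (snd z, - a * snd z - g t * k (fst z))"

definition adjoint2 :: "complex^2^2 \<Rightarrow> complex^2^2" where
  "adjoint2 A = (\<chi> i j. cnj (A $ j $ i))"

definition hermitian2 :: "complex^2^2 \<Rightarrow> bool" where
  "hermitian2 H \<longleftrightarrow> adjoint2 H = H"

definition posdef2 :: "complex^2^2 \<Rightarrow> bool" where
  "posdef2 H \<longleftrightarrow> hermitian2 H \<and>
     (\<forall>v::complex^2. v \<noteq> 0 \<longrightarrow> 0 < Re (\<Sum>i\<in>UNIV. cnj (v $ i) * (H *v v) $ i))"

text \<open>The matrix tilde A(t,mu), with tilde beta = bt, tilde phi = pt.\<close>
definition Atilde :: "real \<Rightarrow> real \<Rightarrow> (real \<Rightarrow> real) \<Rightarrow> real \<Rightarrow> real \<Rightarrow> complex^2^2" where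
  "Atilde \<alpha> bt pt \<mu> t = vector [vector [0, 1],
       vector [complex_of_real (- bt * \<mu>^2 - \<mu> * pt t), complex_of_real (- \<alpha> * \<mu>)]]"

definition spec_norm :: "complex^2^2 \<Rightarrow> real" where
  "spec_norm A = onorm (\<lambda>v. A *v v)"

end

theory Submission
  imports Defs
begin

text \<open>The periodic Hermitian solution H of the Lyapunov matrix equation gives a quadratic form
  V(t, z), periodic in t, whose derivative along the linearised system is -|z|^2. Asymptotic
  stability of the linearisation forces V to be positive definite: if V(t, w) \<le> 0, then V becomes
  strictly negative and stays so along the solution through w, although that solution tends to 0.
  By periodicity and compactness m |z|^2 \<le> V(t, z) \<le> h_max |z|^2. Along the perturbed nonlinear
  system the derivative of V acquires the term 2 (H z)_2 d(t, z), where d collects the parameter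
  perturbations and f(y) - f'(0) y; the two smallness hypotheses and the quadratic bound on f give
  dV/dt \<le> -|z|^2/4 near 0. This traps solutions near 0 (stability), makes V decay exponentially
  (attractivity) and, applied to the field frozen outside a box, yields global solutions for small
  data.\<close>

lemma norm_prod_real: "norm z = sqrt ((fst z)\<^sup>2 + (snd z)\<^sup>2)" for z :: "real \<times> real"
  by (cases z) (simp add: norm_Pair)

lemma norm_prod_real_power2: "(norm z)\<^sup>2 = (fst z)\<^sup>2 + (snd z)\<^sup>2" for z :: "real \<times> real"
  by (simp add: norm_prod_real)

lemma abs_fst_le_norm: "\<bar>fst z\<bar> \<le> norm z" and abs_snd_le_norm: "\<bar>snd z\<bar> \<le> norm z"
  for z :: "real \<times> real"
  unfolding norm_prod_real by (auto intro!: real_le_rsqrt)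

lemma norm_Pair_le_abs_add: "norm (a, b) \<le> \<bar>a\<bar> + \<bar>b\<bar>" for a b :: real
proof -
  have "sqrt (a\<^sup>2 + b\<^sup>2) \<le> \<bar>a\<bar> + \<bar>b\<bar>"
    by (rule real_le_lsqrt) (auto simp: power2_eq_square algebra_simps)
  then show ?thesis by (simp add: norm_Pair)
qed

lemma Cauchy_Schwarz_real2: "\<bar>x * a + y * b\<bar> \<le> sqrt (x\<^sup>2 + y\<^sup>2) * sqrt (a\<^sup>2 + b\<^sup>2)"
  for x y a b :: real
proof -
  have "(x * a + y * b)\<^sup>2 \<le> (x\<^sup>2 + y\<^sup>2) * (a\<^sup>2 + b\<^sup>2)"
    using sum_squares_ge_zero[of "x*b - y*a" 0] by (simp add: power2_eq_square algebra_simps)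
  then have "\<bar>x * a + y * b\<bar> \<le> sqrt ((x\<^sup>2 + y\<^sup>2) * (a\<^sup>2 + b\<^sup>2))"
    using real_sqrt_le_mono by fastforce
  then show ?thesis by (simp add: real_sqrt_mult)
qed

lemma exists_radius_quadratic_below:
  fixes m h r :: real
  assumes "m > 0" "h > 0" "r > 0"
  shows "\<exists>\<delta>>0. \<delta> \<le> r \<and> h * \<delta>\<^sup>2 < m * r\<^sup>2"
proof -
  define s where "s = sqrt (m / (2 * h))"
  have s0: "s > 0" using assms by (simp add: s_def)
  define \<delta> where "\<delta> = min r (s * r)"
  have d0: "\<delta> > 0" using s0 assms by (simp add: \<delta>_def)
  have "\<delta>\<^sup>2 \<le> (s * r)\<^sup>2" using d0 by (intro power_mono) (auto simp: \<delta>_def)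
  also have "\<dots> = m / (2 * h) * r\<^sup>2" using assms by (simp add: s_def power_mult_distrib)
  finally have "h * \<delta>\<^sup>2 \<le> h * (m / (2 * h) * r\<^sup>2)" using assms by (intro mult_left_mono) auto
  also have "\<dots> < m * r\<^sup>2" using assms by (simp add: field_simps)
  finally show ?thesis using d0 by (intro exI[of _ \<delta>]) (auto simp: \<delta>_def)
qed

lemma DERIV_within_nonpos_imp_decreasing:
  fixes V :: "real \<Rightarrow> real"
  assumes ab: "a \<le> b"
    and deriv: "\<And>t. t \<in> {a..b} \<Longrightarrow> \<exists>D. (V has_real_derivative D) (at t within {a..b}) \<and> D \<le> 0"
  shows "V b \<le> V a"
proof (rule DERIV_nonpos_imp_decreasing_open[OF ab])
  fix x assume x: "a < x" "x < b"
  then obtain D where "(V has_real_derivative D) (at x within {a..b})" "D \<le> 0"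
    using deriv[of x] by auto
  then show "\<exists>y. DERIV V x :> y \<and> y \<le> 0"
    using at_within_Icc_at[of a x b] x by auto
next
  show "continuous_on {a..b} V"
    unfolding continuous_on_eq_continuous_within using deriv DERIV_continuous by blast
qed

lemma has_vector_derivative_within_Un:
  assumes "(f has_vector_derivative D) (at x within S)" "(f has_vector_derivative D) (at x within U)"
  shows "(f has_vector_derivative D) (at x within (S \<union> U))"
  using assms unfolding has_vector_derivative_def has_derivative_within
  by (auto intro: Lim_Un)

lemma has_vector_derivative_bounded_linear:
  assumes L: "bounded_linear L" and g: "(g has_vector_derivative D) F"
  shows "((\<lambda>x. L (g x)) has_vector_derivative L D) F"
  using bounded_linear.has_derivative[OF L g[unfolded has_vector_derivative_def]]
  unfolding has_vector_derivative_def by (simp add: linear_simps L)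

lemma continuous_on_compose_Lipschitz:
  fixes G :: "real \<Rightarrow> 'a::metric_space \<Rightarrow> 'b::real_normed_vector"
  assumes cont: "\<And>z. continuous_on S (\<lambda>t. G t z)"
    and lip: "\<And>t z w. t \<in> S \<Longrightarrow> norm (G t z - G t w) \<le> K * dist z w"
    and xc: "continuous_on S x"
  shows "continuous_on S (\<lambda>s. G s (x s))"
  unfolding continuous_on_def
proof
  fix s0 assume s0: "s0 \<in> S"
  have frozen: "((\<lambda>s. G s (x s0)) \<longlongrightarrow> G s0 (x s0)) (at s0 within S)"
    using cont[of "x s0"] s0 unfolding continuous_on_def by blast
  have xl: "(x \<longlongrightarrow> x s0) (at s0 within S)"
    using xc s0 unfolding continuous_on_def by blast
  have moving: "((\<lambda>s. G s (x s) - G s (x s0)) \<longlongrightarrow> 0) (at s0 within S)"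
  proof (rule Lim_null_comparison)
    show "\<forall>\<^sub>F s in at s0 within S. norm (G s (x s) - G s (x s0)) \<le> K * dist (x s) (x s0)"
      using lip by (auto simp: eventually_at_filter)
    have "((\<lambda>s. dist (x s) (x s0)) \<longlongrightarrow> dist (x s0) (x s0)) (at s0 within S)"
      by (intro tendsto_intros xl)
    then show "((\<lambda>s. K * dist (x s) (x s0)) \<longlongrightarrow> 0) (at s0 within S)"
      using tendsto_mult_left[of _ 0 _ K] by force
  qed
  have "((\<lambda>s. (G s (x s) - G s (x s0)) + G s (x s0)) \<longlongrightarrow> 0 + G s0 (x s0)) (at s0 within S)"
    by (intro tendsto_add frozen moving)
  then show "((\<lambda>s. G s (x s)) \<longlongrightarrow> G s0 (x s0)) (at s0 within S)" by simp
qed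

lemma is_solution_on_subset:
  "is_solution_on F S x \<Longrightarrow> U \<subseteq> S \<Longrightarrow> is_solution_on F U x"
  unfolding is_solution_on_def by (auto intro: has_vector_derivative_within_subset)

lemma is_solution_on_continuous: "is_solution_on F S x \<Longrightarrow> continuous_on S x"
  unfolding is_solution_on_def continuous_on_eq_continuous_within
  by (auto intro: has_vector_derivative_continuous)

lemma barrier_not_crossed:
  fixes W N :: "real \<Rightarrow> real"
  assumes ab: "a \<le> b" and cW: "continuous_on {a..b} W" and cN: "continuous_on {a..b} N"
    and m: "m > 0"
    and lower: "\<And>t. t \<in> {a..b} \<Longrightarrow> m * N t \<le> W t"
    and dec: "\<And>s. s \<in> {a..b} \<Longrightarrow> (\<forall>\<tau>\<in>{a..s}. N \<tau> < R) \<Longrightarrow> W s \<le> W a"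
    and W_start: "W a < m * R" and N_start: "N a < R"
  shows "\<forall>t\<in>{a..b}. N t < R"
proof (rule ccontr)
  assume "\<not> (\<forall>t\<in>{a..b}. N t < R)"
  define A where "A = {a..b} \<inter> N -` {R..}"
  have A_ne: "A \<noteq> {}" using \<open>\<not> _\<close> by (auto simp: A_def not_less)
  have A_closed: "closed A" unfolding A_def by (rule continuous_closed_preimage[OF cN]) auto
  have A_bdd: "bdd_below A" unfolding A_def by (rule bdd_belowI[where m=a]) auto
  define t1 where "t1 = Inf A"
  have "t1 \<in> A" unfolding t1_def by (rule closed_contains_Inf[OF A_ne A_bdd A_closed])
  then have t1: "t1 \<in> {a..b}" and N_t1: "N t1 \<ge> R" by (auto simp: A_def)
  have below: "N \<tau> < R" if "\<tau> \<in> {a..b}" "\<tau> < t1" for \<tau>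
  proof (rule ccontr)
    assume "\<not> N \<tau> < R"
    then have "\<tau> \<in> A" using that by (auto simp: A_def)
    then have "t1 \<le> \<tau>" unfolding t1_def by (rule cInf_lower[OF _ A_bdd])
    then show False using that by simp
  qed
  have "t1 \<noteq> a" using N_t1 N_start by auto
  then have t1a: "t1 > a" using t1 by simp
  have W_before: "W s \<le> W a" if "s \<in> {a..b}" "s < t1" for s
    using dec[OF that(1)] below that by auto
  have "W t1 \<le> W a"
  proof (rule ccontr)
    assume "\<not> W t1 \<le> W a"
    then have e: "W t1 - W a > 0" by simp
    have "continuous (at t1 within {a..b}) W"
      using cW t1 continuous_on_eq_continuous_within by blast
    then obtain d where d: "d > 0"
      and close: "\<And>s. s \<in> {a..b} \<Longrightarrow> dist s t1 < d \<Longrightarrow> dist (W s) (W t1) < W t1 - W a"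
      using e unfolding continuous_within_eps_delta by blast
    define s where "s = max a (t1 - d / 2)"
    have s: "s \<in> {a..b}" "s < t1" using t1a t1 d by (auto simp: s_def)
    have "dist s t1 < d" using t1a d by (auto simp: s_def dist_real_def)
    then have "dist (W s) (W t1) < W t1 - W a" using close s by blast
    then have "W s > W a" by (simp add: dist_real_def)
    then show False using W_before[OF s] by simp
  qed
  then have "m * N t1 < m * R" using lower[OF t1] W_start by simp
  then show False using m N_t1 by simp
qed

lemma tendsto_zero_of_exponential_bound:
  fixes x :: "real \<Rightarrow> 'a::real_normed_vector"
  assumes c: "c > 0" and bound: "\<And>t. t \<ge> t0 \<Longrightarrow> (norm (x t))\<^sup>2 \<le> C * exp (- c * (t - t0))"
  shows "(x \<longlongrightarrow> 0) at_top"
proof -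
  have "filterlim (\<lambda>t. t - t0) at_top (at_top :: real filter)"
    by (rule filterlim_tendsto_add_at_top[OF tendsto_const filterlim_ident, of "- t0", simplified])
  then have "filterlim (\<lambda>t. c * (t - t0)) at_top at_top"
    by (rule filterlim_tendsto_pos_mult_at_top[OF tendsto_const c])
  then have "filterlim (\<lambda>t. - c * (t - t0)) at_bot at_top"
    by (simp add: filterlim_uminus_at_top)
  then have "((\<lambda>t. exp (- c * (t - t0))) \<longlongrightarrow> 0) at_top"
    by (rule filterlim_compose[OF exp_at_bot])
  then have "((\<lambda>t. C * exp (- c * (t - t0))) \<longlongrightarrow> 0) at_top"
    by (rule tendsto_mult_right_zero)
  moreover have "\<forall>\<^sub>F t in at_top. norm ((norm (x t))\<^sup>2) \<le> C * exp (- c * (t - t0))"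
    using bound unfolding eventually_at_top_linorder by auto
  ultimately have "((\<lambda>t. (norm (x t))\<^sup>2) \<longlongrightarrow> 0) at_top"
    by (rule Lim_null_comparison[rotated])
  then have "((\<lambda>t. sqrt ((norm (x t))\<^sup>2)) \<longlongrightarrow> sqrt 0) at_top" by (rule tendsto_real_sqrt)
  then show ?thesis by (simp add: tendsto_norm_zero_iff)
qed

lemma C1_Lipschitz_on_interval:
  fixes f :: "real \<Rightarrow> real"
  assumes diff: "\<And>x. f differentiable (at x)" and cont: "continuous_on UNIV (deriv f)"
  shows "\<exists>L\<ge>0. \<forall>a b. \<bar>a\<bar> \<le> c \<longrightarrow> \<bar>b\<bar> \<le> c \<longrightarrow> \<bar>f a - f b\<bar> \<le> L * \<bar>a - b\<bar>"
proof -
  have "compact (deriv f ` {-c..c})"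
    by (intro compact_continuous_image compact_Icc continuous_on_subset[OF cont]) simp
  then obtain L0 where L0: "\<forall>y\<in>deriv f ` {-c..c}. norm y \<le> L0"
    unfolding bounded_iff by (metis compact_imp_bounded bounded_iff)
  define L where "L = max L0 0"
  have L: "\<And>z. z \<in> {-c..c} \<Longrightarrow> \<bar>deriv f z\<bar> \<le> L" using L0 by (force simp: L_def)
  have f_cont: "continuous_on S f" for S
    using diff by (meson continuous_at_imp_continuous_on differentiable_imp_continuous_within)
  have ordered: "\<bar>f b - f a\<bar> \<le> L * \<bar>b - a\<bar>" if ab: "a < b" "\<bar>a\<bar> \<le> c" "\<bar>b\<bar> \<le> c" for a b
  proof -
    obtain l z where z: "a < z" "z < b" and dz: "DERIV f z :> l" and eq: "f b - f a = (b - a) * l"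
      using MVT[OF ab(1) f_cont] diff by blast
    have "z \<in> {-c..c}" using z ab by auto
    then have "\<bar>l\<bar> \<le> L" using L[of z] DERIV_imp_deriv[OF dz] by simp
    then show ?thesis using eq ab by (simp add: abs_mult mult.commute mult_left_mono)
  qed
  have "\<bar>f a - f b\<bar> \<le> L * \<bar>a - b\<bar>" if "\<bar>a\<bar> \<le> c" "\<bar>b\<bar> \<le> c" for a b
    using ordered[of a b] ordered[of b a] that
    by (cases a b rule: linorder_cases) (auto simp: abs_minus_commute)
  moreover have "L \<ge> 0" by (simp add: L_def)
  ultimately show ?thesis by blast
qed

section \<open>Periodic extension\<close>

definition period_reduce :: "real \<Rightarrow> real \<Rightarrow> real" where
  "period_reduce T s = s - T * of_int \<lfloor>s / T\<rfloor>"

definition periodic_ext :: "real \<Rightarrow> (real \<Rightarrow> 'a) \<Rightarrow> real \<Rightarrow> 'a" where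
  "periodic_ext T u s = u (period_reduce T s)"

lemma period_reduce_range:
  assumes T: "T > 0" shows "period_reduce T s \<in> {0..T}"
proof -
  have "of_int \<lfloor>s / T\<rfloor> * T \<le> s" "s < (of_int \<lfloor>s / T\<rfloor> + 1) * T"
    using floor_divide_lower[OF T, of s] floor_divide_upper[OF T, of s] by auto
  then show ?thesis unfolding period_reduce_def by (simp add: algebra_simps)
qed

lemma periodic_int_shift:
  fixes F :: "real \<Rightarrow> 'b"
  assumes "\<And>t. F (t + T) = F t"
  shows "F (t + of_int k * T) = F t"
proof -
  have nat_shift: "F (t + real n * T) = F t" for t n
    by (induction n arbitrary: t) (auto simp: algebra_simps assms[of "_ + _", simplified add.assoc] dest: sym,
        metis assms add.commute add.left_commute)
  show ?thesis
  proof (cases "k \<ge> 0")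
    case True then show ?thesis using nat_shift[of t "nat k"] by simp
  next
    case False
    have "F (t + of_int k * T + real (nat (-k)) * T) = F (t + of_int k * T)" by (rule nat_shift)
    moreover have "t + of_int k * T + real (nat (-k)) * T = t" using False by (simp add: algebra_simps)
    ultimately show ?thesis by simp
  qed
qed

lemma periodic_period_reduce:
  assumes "\<And>t. F (t + T) = F t" shows "F (period_reduce T s) = F s"
  using periodic_int_shift[of F T s "- \<lfloor>s / T\<rfloor>"] assms by (simp add: period_reduce_def mult.commute)

lemma periodic_ext_on_shifted_period:
  assumes T: "T > 0" and u_per: "u 0 = u T"
    and s: "of_int j * T \<le> s" "s \<le> of_int j * T + T"
  shows "periodic_ext T u s = u (s - of_int j * T)"
proof (cases "s = of_int j * T + T")
  case True
  have "s / T = of_int (j + 1)" using True T by (simp add: field_simps)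
  then have "\<lfloor>s / T\<rfloor> = j + 1" by (simp only: floor_of_int)
  then show ?thesis using True u_per by (simp add: periodic_ext_def period_reduce_def algebra_simps)
next
  case False
  then have "\<lfloor>s / T\<rfloor> = j" using s T by (intro floor_unique) (auto simp: field_simps)
  then show ?thesis by (simp add: periodic_ext_def period_reduce_def algebra_simps)
qed

lemma periodic_ext_on_period:
  "T > 0 \<Longrightarrow> u 0 = u T \<Longrightarrow> s \<in> {0..T} \<Longrightarrow> periodic_ext T u s = u s"
  using periodic_ext_on_shifted_period[of T u 0 s] by simp

lemma periodic_continuous_bounded:
  fixes \<phi> :: "real \<Rightarrow> real"
  assumes T: "T > 0" and cont: "continuous_on UNIV \<phi>" and per: "\<And>t. \<phi> (t + T) = \<phi> t"
  shows "\<exists>M. \<forall>t. \<bar>\<phi> t\<bar> \<le> M"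
proof -
  have "compact (\<phi> ` {0..T})"
    by (intro compact_continuous_image compact_Icc continuous_on_subset[OF cont]) simp
  then obtain M where M: "\<forall>y\<in>\<phi> ` {0..T}. norm y \<le> M"
    unfolding bounded_iff by (metis compact_imp_bounded bounded_iff)
  have "\<bar>\<phi> t\<bar> \<le> M" for t
  proof -
    have "norm (\<phi> (period_reduce T t)) \<le> M" using M period_reduce_range[OF T, of t] by blast
    moreover have "\<phi> (period_reduce T t) = \<phi> t" by (rule periodic_period_reduce) (rule per)
    ultimately show ?thesis by simp
  qed
  then show ?thesis by blast
qed

context
  fixes T :: real and u :: "real \<Rightarrow> 'a::real_normed_vector" and F :: "real \<Rightarrow> 'a \<Rightarrow> 'a"
  assumes T: "T > 0" and u_per: "u 0 = u T"
    and u_deriv: "\<And>t. t \<in> {0..T} \<Longrightarrow> (u has_vector_derivative F t (u t)) (at t within {0..T})"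
    and F_per: "\<And>t z. F (t + T) z = F t z"
begin

lemma periodic_ext_has_vector_derivative_on_shifted_period:
  assumes t: "t \<in> {of_int j * T .. of_int j * T + T}"
  shows "(periodic_ext T u has_vector_derivative F t (u (t - of_int j * T)))
           (at t within {of_int j * T .. of_int j * T + T})"
proof -
  let ?a = "of_int j * T"
  have shift: "((\<lambda>s. s - ?a) has_vector_derivative 1) (at t within {?a..?a+T})"
    by (auto intro!: derivative_eq_intros simp: has_real_derivative_iff_has_vector_derivative[symmetric])
  have img: "(\<lambda>s. s - ?a) ` {?a..?a+T} = {0..T}"
    by (auto simp: image_iff intro!: bexI[where x="_ + ?a"])
  have "(u has_vector_derivative F (t - ?a) (u (t - ?a))) (at (t - ?a) within (\<lambda>s. s - ?a) ` {?a..?a+T})"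
    unfolding img using u_deriv[of "t - ?a"] t by auto
  from vector_diff_chain_within[OF shift this]
  have "((\<lambda>s. u (s - ?a)) has_vector_derivative F (t - ?a) (u (t - ?a))) (at t within {?a..?a+T})"
    by (simp add: o_def)
  moreover have "F (t - ?a) (u (t - ?a)) = F t (u (t - ?a))"
    using periodic_int_shift[of "\<lambda>s. F s (u (t - ?a))" T t "-j"] F_per by simp
  ultimately have "((\<lambda>s. u (s - ?a)) has_vector_derivative F t (u (t - ?a))) (at t within {?a..?a+T})"
    by simp
  then show ?thesis
    by (rule has_vector_derivative_transform[rotated 2])
      (use t periodic_ext_on_shifted_period[OF T u_per] in auto)
qed

text \<open>At the junction points k T the one-sided derivatives from the two adjacent periods agree
  because u 0 = u T and F is periodic.\<close>

lemma periodic_ext_has_vector_derivative: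
  "(periodic_ext T u has_vector_derivative F t (periodic_ext T u t)) (at t)"
proof -
  define k where "k = \<lfloor>t / T\<rfloor>"
  have "of_int k \<le> t / T" "t / T < of_int k + 1" unfolding k_def by linarith+
  then have k: "of_int k * T \<le> t" "t < of_int k * T + T" using T by (auto simp: field_simps)
  have ext_t: "periodic_ext T u t = u (t - of_int k * T)"
    by (rule periodic_ext_on_shifted_period[OF T u_per]) (use k in auto)
  note right = periodic_ext_has_vector_derivative_on_shifted_period[of t k]
  show ?thesis
  proof (cases "t = of_int k * T")
    case False
    then have "at t within {of_int k * T .. of_int k * T + T} = at t"
      using k by (intro at_within_Icc_at) auto
    then show ?thesis using right k by (simp add: ext_t)
  next
    case True
    have "(periodic_ext T u has_vector_derivative F t (u (t - of_int (k - 1) * T)))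
            (at t within {of_int (k - 1) * T .. of_int (k - 1) * T + T})"
      by (rule periodic_ext_has_vector_derivative_on_shifted_period) (use True T in \<open>auto simp: algebra_simps\<close>)
    moreover have "u (t - of_int (k - 1) * T) = u (t - of_int k * T)"
      using True u_per by (simp add: algebra_simps)
    ultimately have left: "(periodic_ext T u has_vector_derivative F t (u (t - of_int k * T)))
            (at t within {t - T .. t})"
      using True by (simp add: algebra_simps)
    have "(periodic_ext T u has_vector_derivative F t (u (t - of_int k * T)))
            (at t within ({t - T .. t} \<union> {t .. t + T}))"
      by (rule has_vector_derivative_within_Un[OF left]) (use right k True in auto)
    moreover have "{t - T .. t} \<union> {t .. t + T} = {t - T .. t + T}" using T by auto
    moreover have "at t within {t - T .. t + T} = at t" using T by (intro at_within_Icc_at) auto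
    ultimately show ?thesis by (simp add: ext_t)
  qed
qed

end

section \<open>Global solutions of bounded Lipschitz systems\<close>

fun picard_iterate ::
  "(real \<Rightarrow> real \<times> real \<Rightarrow> real \<times> real) \<Rightarrow> real \<Rightarrow> real \<times> real \<Rightarrow> nat \<Rightarrow> real \<Rightarrow> real \<times> real" where
  "picard_iterate G t0 x0 0 t = x0"
| "picard_iterate G t0 x0 (Suc n) t = x0 + integral {t0..t} (\<lambda>s. G s (picard_iterate G t0 x0 n s))"

lemma has_integral_power_shift:
  assumes "t0 \<le> t"
  shows "((\<lambda>s. (s - t0)^k) has_integral (t - t0)^(Suc k) / real (Suc k)) {t0..t}"
proof -
  have "((\<lambda>s. (s - t0)^k) has_integral
          ((\<lambda>s. (s-t0)^(Suc k) / real (Suc k)) t - (\<lambda>s. (s-t0)^(Suc k) / real (Suc k)) t0)) {t0..t}"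
  proof (rule fundamental_theorem_of_calculus[OF assms])
    fix s assume "s \<in> {t0..t}"
    show "((\<lambda>s. (s-t0)^(Suc k) / real (Suc k)) has_vector_derivative (s - t0)^k) (at s within {t0..t})"
      unfolding has_real_derivative_iff_has_vector_derivative[symmetric]
      by (rule derivative_eq_intros refl | simp)+
  qed
  then show ?thesis by simp
qed

locale bounded_Lipschitz_field =
  fixes G :: "real \<Rightarrow> real \<times> real \<Rightarrow> real \<times> real" and t0 K B :: real and x0 :: "real \<times> real"
  assumes K: "K > 0" and B: "B \<ge> 0"
    and cont: "\<And>z. continuous_on {t0..} (\<lambda>t. G t z)"
    and lip: "\<And>t z w. t \<ge> t0 \<Longrightarrow> norm (G t z - G t w) \<le> K * norm (z - w)"
    and bnd: "\<And>t z. t \<ge> t0 \<Longrightarrow> norm (G t z) \<le> B"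
begin

abbreviation "P \<equiv> picard_iterate G t0 x0"

lemma continuous_on_field_along:
  "continuous_on {t0..b} x \<Longrightarrow> continuous_on {t0..b} (\<lambda>s. G s (x s))"
  by (rule continuous_on_compose_Lipschitz[OF continuous_on_subset[OF cont], where K=K])
    (auto intro: lip simp: dist_norm)

lemma picard_continuous: "continuous_on {t0..b} (P n)"
proof (induction n)
  case (Suc n)
  have "continuous_on {t0..b} (\<lambda>t. integral {t0..t} (\<lambda>s. G s (P n s)))"
    by (rule indefinite_integral_continuous_1 integrable_continuous_real
        continuous_on_field_along Suc)+
  then show ?case by (simp add: continuous_on_add)
qed simp

lemma picard_integrable: "(\<lambda>s. G s (P n s)) integrable_on {t0..t}"
  by (rule integrable_continuous_real continuous_on_field_along picard_continuous)+

lemma picard_step_bound: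
  "t0 \<le> t \<Longrightarrow> norm (P (Suc n) t - P n t) \<le> B * K^n * (t - t0)^(Suc n) / fact (Suc n)"
proof (induction n arbitrary: t)
  case 0
  have "norm (integral {t0..t} (\<lambda>s. G s x0)) \<le> integral {t0..t} (\<lambda>s. B)"
    by (rule integral_norm_bound_integral) (use picard_integrable[of 0 t] bnd in auto)
  then show ?case using 0 by (simp add: mult.commute)
next
  case (Suc n)
  let ?c = "K * (B * K^n / fact (Suc n))"
  have diff: "P (Suc (Suc n)) t - P (Suc n) t = integral {t0..t} (\<lambda>s. G s (P (Suc n) s) - G s (P n s))"
    by (simp add: integral_diff picard_integrable[of "Suc n", simplified] picard_integrable[of n])
  have majorant: "((\<lambda>s. ?c * (s - t0)^(Suc n)) has_integral
      ?c * ((t - t0)^(Suc (Suc n)) / real (Suc (Suc n)))) {t0..t}"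
    by (intro has_integral_mult_right has_integral_power_shift Suc.prems)
  have "norm (integral {t0..t} (\<lambda>s. G s (P (Suc n) s) - G s (P n s)))
      \<le> integral {t0..t} (\<lambda>s. ?c * (s - t0)^(Suc n))"
  proof (rule integral_norm_bound_integral)
    show "(\<lambda>s. G s (P (Suc n) s) - G s (P n s)) integrable_on {t0..t}"
      using picard_integrable[of "Suc n"] picard_integrable[of n] by (intro integrable_diff) auto
    show "(\<lambda>s. ?c * (s - t0)^(Suc n)) integrable_on {t0..t}"
      using majorant by blast
    fix s assume s: "s \<in> {t0..t}"
    have "norm (G s (P (Suc n) s) - G s (P n s)) \<le> K * norm (P (Suc n) s - P n s)"
      using lip s by auto
    also have "\<dots> \<le> K * (B * K ^ n * (s - t0) ^ Suc n / fact (Suc n))"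
      using Suc.IH[of s] s K by (intro mult_left_mono) auto
    finally show "norm (G s (P (Suc n) s) - G s (P n s)) \<le> ?c * (s - t0)^(Suc n)"
      by simp
  qed
  also have "\<dots> = ?c * ((t - t0)^(Suc (Suc n)) / real (Suc (Suc n)))"
    by (rule integral_unique[OF majorant])
  also have "\<dots> = B * K ^ Suc n * (t - t0) ^ Suc (Suc n) / fact (Suc (Suc n))"
    by (simp add: field_simps)
  finally show ?case using diff by simp
qed

definition "picard_step k t = P (Suc k) t - P k t"
definition "picard_limit t = x0 + (\<Sum>k. picard_step k t)"

lemma picard_iterate_eq_sum: "P n t = x0 + (\<Sum>k<n. picard_step k t)"
proof (induction n)
  case (Suc n) then show ?case by (simp add: picard_step_def algebra_simps del: picard_iterate.simps)
qed simp

lemma summable_picard_majorant: "summable (\<lambda>k. B * K^k * L^(Suc k) / fact (Suc k))"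
proof -
  have "summable (\<lambda>k. inverse (fact k) * (K*L)^k)" by (rule summable_exp)
  from summable_ignore_initial_segment[OF this, of 1]
  have "summable (\<lambda>k. (B / K) * (inverse (fact (Suc k)) * (K*L)^(Suc k)))"
    by (intro summable_mult) simp
  moreover have "(B / K) * (inverse (fact (Suc k)) * (K*L)^(Suc k)) = B * K^k * L^(Suc k) / fact (Suc k)" for k
    using K by (simp add: field_simps power_mult_distrib)
  ultimately show ?thesis by simp
qed

lemma uniform_limit_picard_sum:
  "uniform_limit {t0..b} (\<lambda>n t. \<Sum>k<n. picard_step k t) (\<lambda>t. \<Sum>k. picard_step k t) sequentially"
proof (rule Weierstrass_m_test[OF _ summable_picard_majorant[of "b - t0"]])
  fix n t assume t: "t \<in> {t0..b}"
  have "norm (picard_step n t) \<le> B * K ^ n * (t - t0) ^ Suc n / fact (Suc n)"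
    unfolding picard_step_def using picard_step_bound t by auto
  also have "\<dots> \<le> B * K ^ n * (b - t0) ^ Suc n / fact (Suc n)"
    using t K B by (intro divide_right_mono mult_left_mono power_mono) auto
  finally show "norm (picard_step n t) \<le> B * K ^ n * (b - t0) ^ Suc n / fact (Suc n)" .
qed

lemma picard_uniformly_close:
  "e > 0 \<Longrightarrow> \<forall>\<^sub>F n in sequentially. \<forall>t\<in>{t0..b}. norm (P n t - picard_limit t) < e"
  using uniform_limitD[OF uniform_limit_picard_sum]
  by (auto elim!: eventually_mono simp: picard_iterate_eq_sum picard_limit_def dist_norm)

lemma picard_limit_continuous: "continuous_on {t0..b} picard_limit"
proof -
  have "continuous_on {t0..b} (\<lambda>t. \<Sum>k. picard_step k t)"
  proof (rule uniform_limit_theorem[OF _ uniform_limit_picard_sum])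
    show "\<forall>\<^sub>F n in sequentially. continuous_on {t0..b} (\<lambda>t. \<Sum>k<n. picard_step k t)"
      unfolding picard_step_def by (intro always_eventually allI continuous_intros picard_continuous)
  qed simp
  then show ?thesis unfolding picard_limit_def by (intro continuous_intros)
qed

lemma picard_limit_integral_equation_approx:
  assumes t: "t0 \<le> t" and e: "e > 0"
  shows "norm (picard_limit t - (x0 + integral {t0..t} (\<lambda>s. G s (picard_limit s))))
           \<le> e * (1 + K * (t - t0))"
proof -
  let ?X = picard_limit and ?I = "integral {t0..t} (\<lambda>s. G s (picard_limit s))"
  have int_X: "(\<lambda>s. G s (?X s)) integrable_on {t0..t}"
    by (rule integrable_continuous_real continuous_on_field_along picard_limit_continuous)+
  obtain N where N: "\<And>n. n \<ge> N \<Longrightarrow> \<forall>s\<in>{t0..t}. norm (P n s - ?X s) < e"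
    using picard_uniformly_close[OF e, of t] unfolding eventually_sequentially by blast
  have "norm (integral {t0..t} (\<lambda>s. G s (P N s)) - ?I)
      = norm (integral {t0..t} (\<lambda>s. G s (P N s) - G s (?X s)))"
    using picard_integrable int_X by (simp add: integral_diff)
  also have "\<dots> \<le> integral {t0..t} (\<lambda>s. K * e)"
  proof (rule integral_norm_bound_integral)
    show "(\<lambda>s. G s (P N s) - G s (?X s)) integrable_on {t0..t}"
      using picard_integrable int_X by (intro integrable_diff)
    fix s assume s: "s \<in> {t0..t}"
    have "norm (G s (P N s) - G s (?X s)) \<le> K * norm (P N s - ?X s)" using lip s by auto
    also have "\<dots> \<le> K * e" using N[of N] s K by (auto intro!: mult_left_mono less_imp_le)
    finally show "norm (G s (P N s) - G s (?X s)) \<le> K * e" .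
  qed auto
  also have "\<dots> = K * e * (t - t0)" using t by simp
  finally have step: "norm (integral {t0..t} (\<lambda>s. G s (P N s)) - ?I) \<le> K * e * (t - t0)" .
  have "?X t - (x0 + ?I) = (?X t - P (Suc N) t) + (integral {t0..t} (\<lambda>s. G s (P N s)) - ?I)"
    by simp
  also have "norm \<dots> \<le> norm (?X t - P (Suc N) t) + norm (integral {t0..t} (\<lambda>s. G s (P N s)) - ?I)"
    by (rule norm_triangle_ineq)
  also have "\<dots> \<le> e + K * e * (t - t0)"
    using N[of "Suc N"] t step by (force simp: norm_minus_commute)
  finally show ?thesis by (simp add: algebra_simps)
qed

lemma picard_limit_integral_equation:
  assumes t: "t0 \<le> t"
  shows "picard_limit t = x0 + integral {t0..t} (\<lambda>s. G s (picard_limit s))"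
proof -
  have pos: "1 + K * (t - t0) > 0" using K t by (simp add: add_pos_nonneg)
  have "norm (picard_limit t - (x0 + integral {t0..t} (\<lambda>s. G s (picard_limit s)))) \<le> 0 + e"
    if "e > 0" for e
    using picard_limit_integral_equation_approx[OF t, of "e / (1 + K * (t - t0))"] pos that by simp
  then show ?thesis by (metis field_le_epsilon norm_le_zero_iff right_minus_eq)
qed

lemma picard_limit_is_solution: "is_solution_on G {t0..} picard_limit"
  unfolding is_solution_on_def
proof
  fix t assume t: "t \<in> {t0..}"
  let ?b = "t + 1"
  have "((\<lambda>u. integral {t0..u} (\<lambda>s. G s (picard_limit s))) has_vector_derivative G t (picard_limit t))
          (at t within {t0..?b})"
    using t by (intro integral_has_vector_derivative continuous_on_field_along picard_limit_continuous) auto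
  then have "((\<lambda>u. x0 + integral {t0..u} (\<lambda>s. G s (picard_limit s))) has_vector_derivative
      G t (picard_limit t)) (at t within {t0..?b})"
    using has_vector_derivative_add[OF has_vector_derivative_const] by fastforce
  then have "(picard_limit has_vector_derivative G t (picard_limit t)) (at t within {t0..?b})"
    by (rule has_vector_derivative_transform[rotated 2])
      (use t picard_limit_integral_equation in auto)
  moreover have "at t within {t0..?b} = at t within {t0..}"
    by (rule at_within_nhd[where S="{..<?b}"]) auto
  ultimately show "(picard_limit has_vector_derivative G t (picard_limit t)) (at t within {t0..})"
    by simp
qed

end

lemma bounded_Lipschitz_field_has_solution:
  assumes "bounded_Lipschitz_field G t0 K B"
  shows "\<exists>x. is_solution_on G {t0..} x \<and> x t0 = x0"
proof -
  interpret bounded_Lipschitz_field G t0 K B x0 by (fact assms)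
  show ?thesis
    using picard_limit_is_solution picard_limit_integral_equation[of t0] by auto
qed

section \<open>Hermitian 2 \<times> 2 matrices\<close>

lemma hermitian2_Re_21: "hermitian2 M \<Longrightarrow> Re (M $ 2 $ 1) = Re (M $ 1 $ 2)"
proof -
  assume "hermitian2 M"
  then have "adjoint2 M $ 2 $ 1 = M $ 2 $ 1" by (simp add: hermitian2_def)
  then have "M $ 2 $ 1 = cnj (M $ 1 $ 2)" by (simp add: adjoint2_def)
  then show ?thesis by simp
qed

lemma Re_Lyapunov_rhs_companion:
  fixes M :: "complex^2^2" and c e :: real
  defines "A \<equiv> vector [vector [0, 1], vector [complex_of_real c, complex_of_real e]] :: complex^2^2"
  assumes "hermitian2 M"
  shows "Re ((- mat 1 - M ** A - adjoint2 A ** M) $ 1 $ 1) = -1 - 2 * c * Re (M $ 1 $ 2)"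
    "Re ((- mat 1 - M ** A - adjoint2 A ** M) $ 1 $ 2)
       = - (Re (M $ 1 $ 1) + e * Re (M $ 1 $ 2)) - c * Re (M $ 2 $ 2)"
    "Re ((- mat 1 - M ** A - adjoint2 A ** M) $ 2 $ 2) = -1 - 2 * (Re (M $ 1 $ 2) + e * Re (M $ 2 $ 2))"
  using hermitian2_Re_21[OF assms(2)]
  by (simp_all add: A_def matrix_matrix_mult_def mat_def adjoint2_def sum_2)

lemma norm_matrix_vector_le_sum_norm:
  "norm (M *v v) \<le> (\<Sum>i\<in>UNIV. \<Sum>j\<in>UNIV. norm (M $ i $ j)) * norm v" for M :: "complex^2^2"
proof -
  have "norm (M *v v) \<le> (\<Sum>i\<in>UNIV. norm ((M *v v) $ i))" by (simp add: norm_vec_def L2_set_le_sum)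
  also have "\<dots> \<le> (\<Sum>i\<in>UNIV. \<Sum>j\<in>UNIV. norm (M $ i $ j) * norm v)"
  proof (rule sum_mono)
    fix i
    have "norm ((M *v v) $ i) \<le> (\<Sum>j\<in>UNIV. norm (M $ i $ j * v $ j))"
      unfolding matrix_vector_mult_def by (simp add: norm_sum)
    also have "\<dots> \<le> (\<Sum>j\<in>UNIV. norm (M $ i $ j) * norm v)"
      unfolding norm_mult by (intro sum_mono mult_left_mono Finite_Cartesian_Product.norm_nth_le norm_ge_zero)
    finally show "norm ((M *v v) $ i) \<le> (\<Sum>j\<in>UNIV. norm (M $ i $ j) * norm v)" .
  qed
  finally show ?thesis by (simp add: sum_distrib_right)
qed

lemma spec_norm_le_sum_norm: "spec_norm M \<le> (\<Sum>i\<in>UNIV. \<Sum>j\<in>UNIV. norm (M $ i $ j))"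
  unfolding spec_norm_def by (rule onorm_le) (rule norm_matrix_vector_le_sum_norm)

lemma spec_norm_nonneg: "spec_norm M \<ge> 0"
  unfolding spec_norm_def by (rule onorm_pos_le) simp

lemma hermitian2_Re_bilinear_le_spec_norm:
  fixes M :: "complex^2^2" and z1 z2 w1 w2 :: real
  assumes "hermitian2 M"
  shows "\<bar>z1 * (Re (M$1$1) * w1 + Re (M$1$2) * w2) + z2 * (Re (M$1$2) * w1 + Re (M$2$2) * w2)\<bar>
          \<le> spec_norm M * sqrt (z1\<^sup>2 + z2\<^sup>2) * sqrt (w1\<^sup>2 + w2\<^sup>2)"
proof -
  define w where "w = (vector [complex_of_real w1, complex_of_real w2] :: complex^2)"
  have norm_w: "norm w = sqrt (w1\<^sup>2 + w2\<^sup>2)"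
    by (simp add: w_def norm_vec_def L2_set_def sum_2)
  have Mw1: "Re ((M *v w) $ 1) = Re (M$1$1) * w1 + Re (M$1$2) * w2"
    by (simp add: w_def matrix_vector_mult_def sum_2)
  have Mw2: "Re ((M *v w) $ 2) = Re (M$1$2) * w1 + Re (M$2$2) * w2"
    using hermitian2_Re_21[OF assms] by (simp add: w_def matrix_vector_mult_def sum_2)
  have "\<bar>z1 * Re ((M *v w) $ 1) + z2 * Re ((M *v w) $ 2)\<bar>
        \<le> sqrt (z1\<^sup>2 + z2\<^sup>2) * sqrt ((Re ((M *v w) $ 1))\<^sup>2 + (Re ((M *v w) $ 2))\<^sup>2)"
    by (rule Cauchy_Schwarz_real2)
  also have "sqrt ((Re ((M *v w) $ 1))\<^sup>2 + (Re ((M *v w) $ 2))\<^sup>2) \<le> norm (M *v w)"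
  proof -
    have "(Re ((M *v w) $ 1))\<^sup>2 + (Re ((M *v w) $ 2))\<^sup>2 \<le> (norm ((M *v w) $ 1))\<^sup>2 + (norm ((M *v w) $ 2))\<^sup>2"
      by (intro add_mono; metis abs_Re_le_cmod abs_ge_zero power2_abs power_mono)
    then show ?thesis by (simp add: norm_vec_def L2_set_def sum_2)
  qed
  also have "norm (M *v w) \<le> spec_norm M * norm w"
    unfolding spec_norm_def by (rule onorm) simp
  finally have "\<bar>z1 * Re ((M *v w) $ 1) + z2 * Re ((M *v w) $ 2)\<bar> \<le> sqrt (z1\<^sup>2 + z2\<^sup>2) * (spec_norm M * norm w)"
    by (simp add: mult_left_mono)
  then show ?thesis using Mw1 Mw2 norm_w by (simp add: mult_ac)
qed

section \<open>The Lyapunov function of the linear system\<close>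

text \<open>The parameters \<beta>' and \<phi>' are the paper's \<beta> f'(0) and \<phi> f'(0); A21, A22 below are the
  entries of the second row of the matrix \<open>Atilde\<close>.\<close>

locale periodic_Lyapunov_matrix =
  fixes T \<alpha> \<beta>' \<mu> :: real and \<phi>' :: "real \<Rightarrow> real" and H :: "real \<Rightarrow> complex^2^2"
  assumes T: "T > 0"
    and \<phi>'_per: "\<And>t. \<phi>' (t + T) = \<phi>' t"
    and H_herm: "\<And>t. t \<in> {0..T} \<Longrightarrow> hermitian2 (H t)"
    and H_ode: "\<And>t. t \<in> {0..T} \<Longrightarrow>
        (H has_vector_derivative (- mat 1 - H t ** Atilde \<alpha> \<beta>' \<phi>' \<mu> t - adjoint2 (Atilde \<alpha> \<beta>' \<phi>' \<mu> t) ** H t))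
        (at t within {0..T})"
    and H_per: "H 0 = H T"
begin

definition "A21 t = - \<beta>' * \<mu>^2 - \<mu> * \<phi>' t"
definition "A22 = - \<alpha> * \<mu>"

definition "Hre t = (Re (H t $ 1 $ 1), Re (H t $ 1 $ 2), Re (H t $ 2 $ 2))"
definition "Hre_rhs t w = (-1 - 2 * A21 t * fst (snd w),
                           - (fst w + A22 * fst (snd w)) - A21 t * snd (snd w),
                           -1 - 2 * (fst (snd w) + A22 * snd (snd w)))"

definition "h11 t = fst (periodic_ext T Hre t)"
definition "h12 t = fst (snd (periodic_ext T Hre t))"
definition "h22 t = snd (snd (periodic_ext T Hre t))"

definition "hmax = (SUP t\<in>{0..T}. spec_norm (H t))"

text \<open>For real z this is the Hermitian form z* H z of the periodically extended H.\<close>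

definition "V t z = h11 t * (fst z)\<^sup>2 + 2 * h12 t * fst z * snd z + h22 t * (snd z)\<^sup>2"

lemma Hre_has_vector_derivative:
  assumes t: "t \<in> {0..T}"
  shows "(Hre has_vector_derivative Hre_rhs t (Hre t)) (at t within {0..T})"
proof -
  let ?D = "- mat 1 - H t ** Atilde \<alpha> \<beta>' \<phi>' \<mu> t - adjoint2 (Atilde \<alpha> \<beta>' \<phi>' \<mu> t) ** H t"
  have A: "Atilde \<alpha> \<beta>' \<phi>' \<mu> t = vector [vector [0, 1], vector [complex_of_real (A21 t), complex_of_real A22]]"
    unfolding Atilde_def A21_def A22_def by simp
  have entry: "((\<lambda>s. Re (H s $ i $ j)) has_vector_derivative Re (?D $ i $ j)) (at t within {0..T})" for i j
    by (rule has_vector_derivative_bounded_linear[OF _ H_ode[OF t]])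
      (intro bounded_linear_compose[OF bounded_linear_Re] bounded_linear_compose[OF bounded_linear_vec_nth]
        bounded_linear_vec_nth)
  have "((\<lambda>s. (Re (H s $ 1 $ 1), Re (H s $ 1 $ 2), Re (H s $ 2 $ 2))) has_vector_derivative
        (Re (?D $ 1 $ 1), Re (?D $ 1 $ 2), Re (?D $ 2 $ 2))) (at t within {0..T})"
    by (intro has_vector_derivative_Pair entry)
  then show ?thesis
    unfolding Hre_def Hre_rhs_def Re_Lyapunov_rhs_companion[OF H_herm[OF t], of "A21 t" A22, folded A]
    by simp
qed

lemma h_has_real_derivative:
  "(h11 has_real_derivative (-1 - 2 * A21 t * h12 t)) (at t)"
  "(h12 has_real_derivative (- (h11 t + A22 * h12 t) - A21 t * h22 t)) (at t)"
  "(h22 has_real_derivative (-1 - 2 * (h12 t + A22 * h22 t))) (at t)"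
proof -
  have "(periodic_ext T Hre has_vector_derivative Hre_rhs t (periodic_ext T Hre t)) (at t)"
  proof (rule periodic_ext_has_vector_derivative[OF T])
    show "Hre 0 = Hre T" unfolding Hre_def using H_per by simp
    show "\<And>t z. Hre_rhs (t + T) z = Hre_rhs t z" unfolding Hre_rhs_def A21_def using \<phi>'_per by simp
  qed (rule Hre_has_vector_derivative)
  note d = has_vector_derivative_bounded_linear[OF _ this]
  show "(h11 has_real_derivative (-1 - 2 * A21 t * h12 t)) (at t)"
    using d[OF bounded_linear_fst]
    unfolding has_real_derivative_iff_has_vector_derivative h11_def h12_def Hre_rhs_def by simp
  show "(h12 has_real_derivative (- (h11 t + A22 * h12 t) - A21 t * h22 t)) (at t)"
    using d[OF bounded_linear_compose[OF bounded_linear_fst bounded_linear_snd]]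
    unfolding has_real_derivative_iff_has_vector_derivative h11_def h12_def h22_def Hre_rhs_def by simp
  show "(h22 has_real_derivative (-1 - 2 * (h12 t + A22 * h22 t))) (at t)"
    using d[OF bounded_linear_compose[OF bounded_linear_snd bounded_linear_snd]]
    unfolding has_real_derivative_iff_has_vector_derivative h22_def h12_def Hre_rhs_def by simp
qed

lemma bdd_above_spec_norm_H: "bdd_above ((\<lambda>t. spec_norm (H t)) ` {0..T})"
proof -
  have H_cont: "continuous_on {0..T} H"
    using H_ode unfolding continuous_on_eq_continuous_within by (meson has_vector_derivative_continuous)
  have "continuous_on {0..T} (\<lambda>t. \<Sum>i\<in>UNIV. \<Sum>j\<in>UNIV. norm (H t $ i $ j))"
    by (intro continuous_intros continuous_on_compose2[OF _ H_cont, of UNIV "\<lambda>M. M $ _ $ _"]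
        linear_continuous_on bounded_linear_compose[OF bounded_linear_vec_nth bounded_linear_vec_nth]) auto
  then have "bounded ((\<lambda>t. \<Sum>i\<in>UNIV. \<Sum>j\<in>UNIV. norm (H t $ i $ j)) ` {0..T})"
    by (intro compact_imp_bounded compact_continuous_image) auto
  then obtain B where B: "\<forall>x\<in>(\<lambda>t. \<Sum>i\<in>UNIV. \<Sum>j\<in>UNIV. norm (H t $ i $ j)) ` {0..T}. norm x \<le> B"
    unfolding bounded_iff by blast
  have "(\<Sum>i\<in>UNIV. \<Sum>j\<in>UNIV. norm (H t $ i $ j)) \<le> B" if "t \<in> {0..T}" for t
  proof -
    have "norm (\<Sum>i\<in>UNIV. \<Sum>j\<in>UNIV. norm (H t $ i $ j)) \<le> B" using B that by blast
    then show ?thesis by simp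
  qed
  then show ?thesis
    by (intro bdd_aboveI[where M=B]) (use spec_norm_le_sum_norm order_trans in blast)
qed

lemma spec_norm_H_le_hmax: "t \<in> {0..T} \<Longrightarrow> spec_norm (H t) \<le> hmax"
  unfolding hmax_def by (rule cSUP_upper[OF _ bdd_above_spec_norm_H])

lemma hmax_nonneg: "hmax \<ge> 0"
  using spec_norm_H_le_hmax[of 0] spec_norm_nonneg[of "H 0"] T by simp

lemma h_bilinear_le_hmax:
  "\<bar>z1 * (h11 t * w1 + h12 t * w2) + z2 * (h12 t * w1 + h22 t * w2)\<bar>
     \<le> hmax * sqrt (z1\<^sup>2 + z2\<^sup>2) * sqrt (w1\<^sup>2 + w2\<^sup>2)"
proof -
  have s: "period_reduce T t \<in> {0..T}" by (rule period_reduce_range[OF T])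
  have "\<bar>z1 * (h11 t * w1 + h12 t * w2) + z2 * (h12 t * w1 + h22 t * w2)\<bar>
       \<le> spec_norm (H (period_reduce T t)) * sqrt (z1\<^sup>2 + z2\<^sup>2) * sqrt (w1\<^sup>2 + w2\<^sup>2)"
    using hermitian2_Re_bilinear_le_spec_norm[OF H_herm[OF s], of z1 w1 w2 z2]
    unfolding h11_def h12_def h22_def periodic_ext_def Hre_def by simp
  also have "\<dots> \<le> hmax * sqrt (z1\<^sup>2 + z2\<^sup>2) * sqrt (w1\<^sup>2 + w2\<^sup>2)"
    using spec_norm_H_le_hmax[OF s] by (intro mult_right_mono) auto
  finally show ?thesis .
qed

lemma abs_V_le: "\<bar>V t z\<bar> \<le> hmax * (norm z)\<^sup>2"
  using h_bilinear_le_hmax[of "fst z" t "fst z" "snd z" "snd z"]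
  by (simp add: V_def norm_prod_real power2_eq_square algebra_simps)

lemma abs_H_row2_le: "\<bar>h12 t * fst z + h22 t * snd z\<bar> \<le> hmax * norm z"
  using h_bilinear_le_hmax[of 0 t "fst z" "snd z" 1] by (simp add: norm_prod_real)

lemma V_scaleR: "V t (c *\<^sub>R z) = c\<^sup>2 * V t z"
  by (simp add: V_def power2_eq_square algebra_simps)

lemma V_period_reduce: "V (period_reduce T t) z = V t z"
proof -
  have "periodic_ext T Hre (period_reduce T t) = Hre (period_reduce T t)"
    by (rule periodic_ext_on_period[OF T _ period_reduce_range[OF T]]) (simp add: Hre_def H_per)
  also have "\<dots> = periodic_ext T Hre t" by (simp add: periodic_ext_def)
  finally show ?thesis by (simp add: V_def h11_def h12_def h22_def)
qed

lemma h_continuous: "continuous_on S h11" "continuous_on S h12" "continuous_on S h22"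
  using h_has_real_derivative by (auto intro!: continuous_at_imp_continuous_on DERIV_isCont)

lemma V_continuous: "continuous_on S (\<lambda>p. V (fst p) (snd p))"
  unfolding V_def
  by (intro continuous_intros continuous_on_compose2[OF h_continuous(1)]
      continuous_on_compose2[OF h_continuous(2)] continuous_on_compose2[OF h_continuous(3)]) auto

lemma V_along_continuous: "continuous_on S x \<Longrightarrow> continuous_on S (\<lambda>t. V t (x t))"
proof -
  assume "continuous_on S x"
  then have "continuous_on S (\<lambda>t. (t, x t))" by (intro continuous_intros)
  from continuous_on_compose2[OF V_continuous[of UNIV] this] show ?thesis by simp
qed

text \<open>The Lyapunov equation makes the derivative of V along the linear system equal to -|z|^2;
  a perturbation d of the second equation adds 2 (H z)_2 d.\<close>

lemma V_has_derivative_along: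
  fixes x :: "real \<Rightarrow> real \<times> real"
  assumes "(x has_vector_derivative (snd (x t), A21 t * fst (x t) + A22 * snd (x t) + d)) (at t within S)"
  shows "((\<lambda>s. V s (x s)) has_real_derivative
           (- (norm (x t))\<^sup>2 + 2 * (h12 t * fst (x t) + h22 t * snd (x t)) * d)) (at t within S)"
proof -
  have dy: "((\<lambda>s. fst (x s)) has_real_derivative snd (x t)) (at t within S)"
    using has_vector_derivative_bounded_linear[OF bounded_linear_fst assms]
    unfolding has_real_derivative_iff_has_vector_derivative by simp
  have dv: "((\<lambda>s. snd (x s)) has_real_derivative (A21 t * fst (x t) + A22 * snd (x t) + d)) (at t within S)"
    using has_vector_derivative_bounded_linear[OF bounded_linear_snd assms]
    unfolding has_real_derivative_iff_has_vector_derivative by simp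
  note dh = h_has_real_derivative[THEN has_field_derivative_at_within, of t S]
  have V_expand: "(\<lambda>s. V s (x s)) = (\<lambda>s. h11 s * (fst (x s) * fst (x s))
       + 2 * (h12 s * (fst (x s) * snd (x s))) + h22 s * (snd (x s) * snd (x s)))"
    by (simp add: V_def power2_eq_square algebra_simps fun_eq_iff)
  show ?thesis unfolding V_expand norm_prod_real_power2
    by (rule DERIV_cong[OF DERIV_add[OF DERIV_add[OF DERIV_mult[OF dh(1) DERIV_mult[OF dy dy]]
          DERIV_cmult[OF DERIV_mult[OF dh(2) DERIV_mult[OF dy dv]], of 2]] DERIV_mult[OF dh(3) DERIV_mult[OF dv dv]]]])
      (simp add: power2_eq_square algebra_simps)
qed

end

locale stable_linearisation = periodic_Lyapunov_matrix +
  assumes linear_stable: "asymp_stable (second_order_sys (\<alpha> * \<mu>) (\<lambda>t. \<beta>' * \<mu>^2 + \<mu> * \<phi>' t) (\<lambda>y. y))"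
begin

abbreviation "linear_field \<equiv> second_order_sys (\<alpha> * \<mu>) (\<lambda>t. \<beta>' * \<mu>^2 + \<mu> * \<phi>' t) (\<lambda>y. y)"

lemma linear_field_eq: "linear_field t z = (snd z, A21 t * fst z + A22 * snd z + 0)"
  by (simp add: second_order_sys_def A21_def A22_def algebra_simps)

lemma V_along_linear_solution_has_derivative:
  assumes sol: "is_solution_on linear_field {t1..} x" and "t1 \<le> a" "s \<in> {a..b}"
  shows "((\<lambda>s. V s (x s)) has_real_derivative - (norm (x s))\<^sup>2) (at s within {a..b})"
proof -
  have "(x has_vector_derivative linear_field s (x s)) (at s within {a..b})"
    using is_solution_on_subset[OF sol, of "{a..b}"] assms unfolding is_solution_on_def by auto
  from V_has_derivative_along[where d=0, OF this[unfolded linear_field_eq]] show ?thesis by simp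
qed

text \<open>While the solution is still near its nonzero initial value, V drops at a definite rate.\<close>

lemma V_along_linear_solution_eventually_negative:
  assumes sol: "is_solution_on linear_field {t1..} x" and nz: "x t1 \<noteq> 0" and V1: "V t1 (x t1) \<le> 0"
  shows "\<exists>c>0. \<forall>\<^sub>F s in at_top. V s (x s) \<le> - c"
proof -
  let ?V = "\<lambda>s. V s (x s)"
  define r where "r = norm (x t1) / 2"
  have r: "r > 0" using nz by (simp add: r_def)
  have "continuous (at t1 within {t1..}) x"
    using is_solution_on_continuous[OF sol] by (simp add: continuous_on_eq_continuous_within)
  then obtain \<tau> where \<tau>: "\<tau> > 0" and near: "\<And>s. s \<in> {t1..} \<Longrightarrow> dist s t1 < \<tau> \<Longrightarrow> dist (x s) (x t1) < r"
    using r unfolding continuous_within_eps_delta by blast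
  define b where "b = t1 + \<tau> / 2"
  define k where "k = r\<^sup>2"
  have k: "k > 0" using r by (simp add: k_def)
  have big: "norm (x s) \<ge> r" if "s \<in> {t1..b}" for s
  proof -
    have "dist (x s) (x t1) < r" using near[of s] that \<tau> by (auto simp: b_def dist_real_def)
    then show ?thesis using norm_triangle_ineq2[of "x t1" "x s"]
      by (simp add: r_def dist_norm norm_minus_commute)
  qed
  have "?V b + k * b \<le> ?V t1 + k * t1"
  proof (rule DERIV_within_nonpos_imp_decreasing[where V="\<lambda>s. ?V s + k * s"])
    show "t1 \<le> b" using \<tau> by (simp add: b_def)
    fix s assume s: "s \<in> {t1..b}"
    have "((\<lambda>s. ?V s + k * s) has_real_derivative - (norm (x s))\<^sup>2 + k * 1) (at s within {t1..b})"
      by (intro DERIV_add V_along_linear_solution_has_derivative[OF sol _ s] DERIV_cmult DERIV_ident) simp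
    moreover have "- (norm (x s))\<^sup>2 + k * 1 \<le> 0"
      using big[OF s] r unfolding k_def by (simp add: power_mono)
    ultimately show "\<exists>D. ((\<lambda>s. ?V s + k * s) has_real_derivative D) (at s within {t1..b}) \<and> D \<le> 0"
      by blast
  qed
  then have Vb: "?V b \<le> - (k * (\<tau> / 2))" using V1 by (simp add: b_def algebra_simps)
  have "?V s \<le> - (k * (\<tau> / 2))" if "s \<ge> b" for s
  proof -
    have "?V s \<le> ?V b"
    proof (rule DERIV_within_nonpos_imp_decreasing[OF that])
      have "t1 \<le> b" using \<tau> by (simp add: b_def)
      fix r assume "r \<in> {b..s}"
      then show "\<exists>D. (?V has_real_derivative D) (at r within {b..s}) \<and> D \<le> 0"
        by (intro exI[of _ "- (norm (x r))\<^sup>2"] conjI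
            V_along_linear_solution_has_derivative[OF sol \<open>t1 \<le> b\<close>]) simp_all
    qed
    then show ?thesis using Vb by simp
  qed
  then show ?thesis using k \<tau> unfolding eventually_at_top_linorder by (intro exI[of _ "k * (\<tau> / 2)"]) auto
qed

text \<open>If V (t1, w) \<le> 0, the solution through a small multiple of w tends to 0 by attractivity,
  so V along it tends to 0, contradicting the previous lemma.\<close>

lemma V_pos:
  assumes t1: "t1 \<in> {0..T}" and w: "w \<noteq> 0"
  shows "V t1 w > 0"
proof (rule ccontr)
  assume "\<not> V t1 w > 0"
  then have Vw: "V t1 w \<le> 0" by simp
  have t1_nonneg: "t1 \<ge> 0" using t1 by simp
  obtain \<delta>1 where "\<delta>1 > 0"
    and exists: "\<And>x0. norm x0 < \<delta>1 \<Longrightarrow> \<exists>x. is_solution_on linear_field {t1..} x \<and> x t1 = x0"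
    using linear_stable t1_nonneg unfolding asymp_stable_def lyap_stable_def by (meson zero_less_one)
  obtain \<delta>2 where "\<delta>2 > 0"
    and attracts: "\<And>x. is_solution_on linear_field {t1..} x \<Longrightarrow> norm (x t1) < \<delta>2 \<Longrightarrow> (x \<longlongrightarrow> 0) at_top"
    using linear_stable t1_nonneg unfolding asymp_stable_def lyap_attractive_def by blast
  define \<delta> where "\<delta> = min \<delta>1 \<delta>2"
  have \<delta>: "\<delta> > 0" "\<delta> \<le> \<delta>1" "\<delta> \<le> \<delta>2" using \<open>\<delta>1 > 0\<close> \<open>\<delta>2 > 0\<close> by (auto simp: \<delta>_def)
  define w' where "w' = (\<delta> / (2 * norm w)) *\<^sub>R w"
  have norm_w': "norm w' = \<delta> / 2" using w \<delta> by (simp add: w'_def)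
  then have "norm w' < \<delta>1" using \<delta> by linarith
  then obtain x where sol: "is_solution_on linear_field {t1..} x" and x1: "x t1 = w'"
    using exists by blast
  have "norm (x t1) < \<delta>2" using x1 norm_w' \<delta> by simp
  then have "(x \<longlongrightarrow> 0) at_top" by (rule attracts[OF sol])
  then have "((\<lambda>s. norm (x s)) \<longlongrightarrow> 0) at_top" by (rule tendsto_norm_zero)
  then have "((\<lambda>s. hmax * (norm (x s))\<^sup>2) \<longlongrightarrow> hmax * 0\<^sup>2) at_top"
    by (intro tendsto_intros)
  then have "((\<lambda>s. hmax * (norm (x s))\<^sup>2) \<longlongrightarrow> 0) at_top" by simp
  moreover have "\<forall>\<^sub>F s in at_top. norm (V s (x s)) \<le> hmax * (norm (x s))\<^sup>2"
    by (simp add: abs_V_le)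
  ultimately have V_lim: "((\<lambda>s. V s (x s)) \<longlongrightarrow> 0) at_top"
    by (rule Lim_null_comparison[rotated])
  have "x t1 \<noteq> 0" using norm_w' \<delta> x1 by auto
  moreover have "V t1 (x t1) \<le> 0"
    using Vw by (simp add: x1 w'_def V_scaleR mult_nonneg_nonpos)
  ultimately obtain c where "c > 0" and neg: "\<forall>\<^sub>F s in at_top. V s (x s) \<le> - c"
    using V_along_linear_solution_eventually_negative[OF sol] by blast
  have "\<forall>\<^sub>F s in at_top. V s (x s) > - c"
    by (rule order_tendstoD(1)[OF V_lim]) (use \<open>c > 0\<close> in simp)
  with neg have "\<forall>\<^sub>F s in at_top. V s (x s) \<le> - c \<and> - c < V s (x s)"
    by (rule eventually_conj)
  then obtain N where "\<And>s. s \<ge> N \<Longrightarrow> V s (x s) \<le> - c \<and> - c < V s (x s)"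
    unfolding eventually_at_top_linorder by blast
  from this[of N] show False by linarith
qed

lemma V_coercive: "\<exists>m>0. \<forall>t z. V t z \<ge> m * (norm z)\<^sup>2"
proof -
  let ?K = "{0..T} \<times> sphere (0::real \<times> real) 1"
  have K: "compact ?K" by (intro compact_Times compact_sphere compact_Icc)
  have "(0, (1::real, 0::real)) \<in> ?K" using T by (simp add: mem_Times_iff)
  then have "?K \<noteq> {}" by blast
  from continuous_attains_inf[OF K this V_continuous]
  obtain p where p: "p \<in> ?K" and p_min: "\<And>q. q \<in> ?K \<Longrightarrow> V (fst p) (snd p) \<le> V (fst q) (snd q)"
    by blast
  define m where "m = V (fst p) (snd p)"
  have "fst p \<in> {0..T}" "snd p \<noteq> 0" using p by (auto simp: mem_Times_iff)
  then have m: "m > 0" unfolding m_def by (rule V_pos)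
  have "V t z \<ge> m * (norm z)\<^sup>2" for t z
  proof (cases "z = 0")
    case False
    define u where "u = (1 / norm z) *\<^sub>R z"
    have "norm u = 1" using False by (simp add: u_def)
    then have "(period_reduce T t, u) \<in> ?K" using period_reduce_range[OF T] by (simp add: mem_Times_iff)
    then have "m \<le> V (period_reduce T t) u" using p_min[of "(period_reduce T t, u)"] by (simp add: m_def)
    then have "m * (norm z)\<^sup>2 \<le> V (period_reduce T t) u * (norm z)\<^sup>2" by (rule mult_right_mono) simp
    also have "\<dots> = V (period_reduce T t) (norm z *\<^sub>R u)" by (simp only: V_scaleR mult.commute)
    also have "norm z *\<^sub>R u = z" using False by (simp add: u_def)
    finally show ?thesis by (simp only: V_period_reduce)
  qed (simp add: V_def)
  then show ?thesis using m by blast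
qed

end

section \<open>The perturbed nonlinear system\<close>

locale perturbed_system =
  stable_linearisation T \<alpha> "\<beta> * deriv f 0" \<mu> "\<lambda>s. \<phi> s * deriv f 0" H
  for T \<alpha> \<beta> \<mu> :: real and \<phi> f :: "real \<Rightarrow> real" and H :: "real \<Rightarrow> complex^2^2" +
  fixes p \<rho> \<Delta>\<alpha> \<Delta>\<beta> :: real and \<Delta>\<phi> :: "real \<Rightarrow> real"
  assumes \<mu>_pos: "\<mu> > 0"
    and \<phi>_cont: "continuous_on UNIV \<phi>" and \<phi>_per: "\<And>t. \<phi> (t + T) = \<phi> t"
    and f_smooth: "\<And>n x. ((deriv ^^ n) f) differentiable (at x)"
    and \<Delta>\<phi>_cont: "continuous_on {0..} \<Delta>\<phi>" and \<Delta>\<phi>_bdd: "bounded (\<Delta>\<phi> ` {0..})"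
    and p: "p \<ge> 0" and \<rho>: "\<rho> > 0"
    and f_quad: "\<And>\<xi>. \<bar>\<xi>\<bar> \<le> \<rho> \<Longrightarrow> \<bar>f \<xi> - deriv f 0 * \<xi>\<bar> \<le> p * \<xi>\<^sup>2"
    and small_\<Delta>\<phi>: "\<mu> * (SUP t\<in>{0..}. \<bar>\<Delta>\<phi> t * deriv f 0\<bar>) < 1 / (8 * (SUP t\<in>{0..T}. spec_norm (H t)))"
    and small_\<Delta>\<alpha>\<beta>: "\<mu> * (\<bar>\<Delta>\<beta> * deriv f 0\<bar> * \<mu> + \<bar>\<Delta>\<alpha>\<bar>) < 1 / (8 * (SUP t\<in>{0..T}. spec_norm (H t)))"
begin

abbreviation "f'0 \<equiv> deriv f 0"

definition "perturbed_coeff t = (\<beta> + \<Delta>\<beta>) * \<mu>^2 + \<mu> * (\<phi> t + \<Delta>\<phi> t)"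

abbreviation "perturbed_field \<equiv> second_order_sys ((\<alpha> + \<Delta>\<alpha>) * \<mu>) perturbed_coeff f"

definition "sup_\<Delta>\<phi> = (SUP t\<in>{0..}. \<bar>\<Delta>\<phi> t * f'0\<bar>)"

definition "perturbation t z = - (\<Delta>\<beta> * f'0 * \<mu>^2 + \<mu> * (\<Delta>\<phi> t * f'0)) * fst z - \<Delta>\<alpha> * \<mu> * snd z
                                - perturbed_coeff t * (f (fst z) - f'0 * fst z)"

definition "linear_gain = \<bar>\<Delta>\<beta> * f'0\<bar> * \<mu>^2 + \<mu> * sup_\<Delta>\<phi> + \<bar>\<Delta>\<alpha>\<bar> * \<mu>"

lemma perturbed_field_eq: "perturbed_field t z = (snd z, A21 t * fst z + A22 * snd z + perturbation t z)"
  by (simp add: second_order_sys_def A21_def A22_def perturbation_def perturbed_coeff_def algebra_simps)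

lemma abs_\<Delta>\<phi>_le_sup: "t \<ge> 0 \<Longrightarrow> \<bar>\<Delta>\<phi> t * f'0\<bar> \<le> sup_\<Delta>\<phi>"
proof -
  obtain B where "\<And>t. t \<in> {0..} \<Longrightarrow> norm (\<Delta>\<phi> t) \<le> B"
    using \<Delta>\<phi>_bdd unfolding bounded_iff by blast
  then have "bdd_above ((\<lambda>t. \<bar>\<Delta>\<phi> t * f'0\<bar>) ` {0..})"
    by (intro bdd_aboveI2[where M="B * \<bar>f'0\<bar>"]) (simp add: abs_mult mult_right_mono)
  then show "t \<ge> 0 \<Longrightarrow> \<bar>\<Delta>\<phi> t * f'0\<bar> \<le> sup_\<Delta>\<phi>"
    unfolding sup_\<Delta>\<phi>_def by (intro cSUP_upper) simp_all
qed

lemma hmax_pos: "hmax > 0"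
proof -
  have "0 \<le> \<mu> * sup_\<Delta>\<phi>" using \<mu>_pos abs_\<Delta>\<phi>_le_sup[of 0] by simp
  also have "\<dots> < 1 / (8 * hmax)" using small_\<Delta>\<phi> unfolding sup_\<Delta>\<phi>_def hmax_def .
  finally show ?thesis by (simp add: zero_less_divide_iff)
qed

lemma linear_gain_small: "2 * hmax * linear_gain < 1 / 2"
proof -
  have "\<mu> * sup_\<Delta>\<phi> < 1 / (8 * hmax)" using small_\<Delta>\<phi> unfolding sup_\<Delta>\<phi>_def hmax_def .
  moreover have "\<mu> * (\<bar>\<Delta>\<beta> * f'0\<bar> * \<mu> + \<bar>\<Delta>\<alpha>\<bar>) < 1 / (8 * hmax)" using small_\<Delta>\<alpha>\<beta> unfolding hmax_def .
  ultimately have "linear_gain < 2 / (8 * hmax)"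
    by (simp add: linear_gain_def power2_eq_square algebra_simps)
  then have "2 * hmax * linear_gain < 2 * hmax * (2 / (8 * hmax))"
    using hmax_pos by (intro mult_strict_left_mono) auto
  also have "\<dots> = 1 / 2" using hmax_pos by simp
  finally show ?thesis .
qed

lemma perturbed_coeff_bounded: "\<exists>G\<ge>0. \<forall>t\<ge>0. \<bar>perturbed_coeff t\<bar> \<le> G"
proof -
  obtain M1 where M1: "\<And>t. \<bar>\<phi> t\<bar> \<le> M1"
    using periodic_continuous_bounded[OF T \<phi>_cont \<phi>_per] by blast
  obtain M2 where M2: "\<And>t. t \<in> {0..} \<Longrightarrow> norm (\<Delta>\<phi> t) \<le> M2"
    using \<Delta>\<phi>_bdd unfolding bounded_iff by blast
  define G where "G = \<bar>\<beta> + \<Delta>\<beta>\<bar> * \<mu>^2 + \<mu> * (M1 + M2)"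
  have "\<bar>perturbed_coeff t\<bar> \<le> G" if "t \<ge> 0" for t
  proof -
    have "\<bar>\<phi> t + \<Delta>\<phi> t\<bar> \<le> M1 + M2" using M1[of t] M2[of t] that by simp
    then have "\<bar>\<mu> * (\<phi> t + \<Delta>\<phi> t)\<bar> \<le> \<mu> * (M1 + M2)" using \<mu>_pos by (simp add: abs_mult)
    then show ?thesis unfolding perturbed_coeff_def G_def
      using abs_triangle_ineq[of "(\<beta> + \<Delta>\<beta>) * \<mu>^2" "\<mu> * (\<phi> t + \<Delta>\<phi> t)"] by (simp add: abs_mult)
  qed
  moreover have "G \<ge> 0" using calculation[of 0] by simp
  ultimately show ?thesis by blast
qed

definition "coeff_bound = (SOME G. G \<ge> 0 \<and> (\<forall>t\<ge>0. \<bar>perturbed_coeff t\<bar> \<le> G))"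

lemma coeff_bound: "coeff_bound \<ge> 0" "\<And>t. t \<ge> 0 \<Longrightarrow> \<bar>perturbed_coeff t\<bar> \<le> coeff_bound"
  using someI_ex[OF perturbed_coeff_bounded] unfolding coeff_bound_def by auto

text \<open>Inside this radius the quadratic part of the perturbation is dominated as well.\<close>

definition "trap_radius = min \<rho> (1 / (8 * hmax * coeff_bound * p + 1))"

lemma trap_radius: "trap_radius > 0" "trap_radius \<le> \<rho>" "8 * hmax * coeff_bound * p * trap_radius \<le> 1"
proof -
  have c: "8 * hmax * coeff_bound * p \<ge> 0" using hmax_pos coeff_bound p by simp
  then have "8 * hmax * coeff_bound * p + 1 > 0" by linarith
  then show "trap_radius > 0" using \<rho> by (simp add: trap_radius_def)
  show "trap_radius \<le> \<rho>" by (simp add: trap_radius_def)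
  have "8 * hmax * coeff_bound * p * trap_radius \<le> 8 * hmax * coeff_bound * p * (1 / (8 * hmax * coeff_bound * p + 1))"
    using c by (intro mult_left_mono) (simp_all add: trap_radius_def)
  also have "\<dots> \<le> 1" using c by (simp add: field_simps)
  finally show "8 * hmax * coeff_bound * p * trap_radius \<le> 1" .
qed

lemma abs_perturbation_le:
  assumes t: "t \<ge> 0" and z: "norm z \<le> \<rho>"
  shows "\<bar>perturbation t z\<bar> \<le> linear_gain * norm z + coeff_bound * p * (norm z)\<^sup>2"
proof -
  let ?y = "fst z" and ?v = "snd z" and ?n = "norm z"
  have y: "\<bar>?y\<bar> \<le> ?n" and v: "\<bar>?v\<bar> \<le> ?n" by (rule abs_fst_le_norm abs_snd_le_norm)+
  have "\<bar>\<Delta>\<beta> * f'0 * \<mu>^2 + \<mu> * (\<Delta>\<phi> t * f'0)\<bar> \<le> \<bar>\<Delta>\<beta> * f'0\<bar> * \<mu>^2 + \<mu> * \<bar>\<Delta>\<phi> t * f'0\<bar>"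
    using \<mu>_pos abs_triangle_ineq[of "\<Delta>\<beta> * f'0 * \<mu>^2" "\<mu> * (\<Delta>\<phi> t * f'0)"] by (simp add: abs_mult)
  also have "\<dots> \<le> \<bar>\<Delta>\<beta> * f'0\<bar> * \<mu>^2 + \<mu> * sup_\<Delta>\<phi>" using abs_\<Delta>\<phi>_le_sup[OF t] \<mu>_pos by simp
  finally have "\<bar>(\<Delta>\<beta> * f'0 * \<mu>^2 + \<mu> * (\<Delta>\<phi> t * f'0)) * ?y\<bar> \<le> (\<bar>\<Delta>\<beta> * f'0\<bar> * \<mu>^2 + \<mu> * sup_\<Delta>\<phi>) * ?n"
    unfolding abs_mult using y by (intro mult_mono) auto
  moreover have "\<bar>\<Delta>\<alpha> * \<mu> * ?v\<bar> \<le> \<bar>\<Delta>\<alpha>\<bar> * \<mu> * ?n"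
    using v \<mu>_pos by (simp add: abs_mult mult_left_mono)
  moreover have "\<bar>perturbed_coeff t * (f ?y - f'0 * ?y)\<bar> \<le> coeff_bound * (p * ?n\<^sup>2)"
  proof -
    have "\<bar>f ?y - f'0 * ?y\<bar> \<le> p * ?y\<^sup>2" using y z by (intro f_quad) simp
    also have "\<dots> \<le> p * ?n\<^sup>2"
      using y p by (intro mult_left_mono) (simp_all add: abs_le_square_iff[symmetric])
    finally show ?thesis unfolding abs_mult using coeff_bound(2)[OF t] by (intro mult_mono) auto
  qed
  ultimately show ?thesis unfolding perturbation_def linear_gain_def abs_mult[symmetric]
    by (simp add: algebra_simps)
qed

text \<open>The linear part of the perturbation costs at most half of -|z|^2 by the smallness
  hypotheses, the quadratic part at most a quarter inside the trapping radius.\<close>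

lemma V_derivative_perturbed_le:
  assumes t: "t \<ge> 0" and z: "norm z \<le> trap_radius"
  shows "- (norm z)\<^sup>2 + 2 * (h12 t * fst z + h22 t * snd z) * perturbation t z \<le> - (norm z)\<^sup>2 / 4"
proof -
  let ?n = "norm z" and ?Hz = "h12 t * fst z + h22 t * snd z"
  have d: "\<bar>perturbation t z\<bar> \<le> linear_gain * ?n + coeff_bound * p * ?n\<^sup>2"
    by (rule abs_perturbation_le[OF t]) (use z trap_radius in simp)
  have "?Hz * perturbation t z \<le> \<bar>?Hz\<bar> * \<bar>perturbation t z\<bar>"
    by (metis abs_ge_self abs_mult)
  then have "2 * ?Hz * perturbation t z \<le> 2 * (\<bar>?Hz\<bar> * \<bar>perturbation t z\<bar>)"
    by linarith
  also have "\<dots> \<le> 2 * ((hmax * ?n) * (linear_gain * ?n + coeff_bound * p * ?n\<^sup>2))"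
    using abs_H_row2_le d hmax_nonneg by (intro mult_left_mono mult_mono) auto
  also have "\<dots> = (2 * hmax * linear_gain) * ?n\<^sup>2 + (2 * hmax * coeff_bound * p * ?n) * ?n\<^sup>2"
    by (simp add: power2_eq_square algebra_simps)
  also have "\<dots> \<le> (1/2) * ?n\<^sup>2 + (1/4) * ?n\<^sup>2"
  proof (intro add_mono mult_right_mono)
    show "2 * hmax * linear_gain \<le> 1/2" using linear_gain_small by simp
    have "2 * hmax * coeff_bound * p * ?n \<le> 2 * hmax * coeff_bound * p * trap_radius"
      using z hmax_pos coeff_bound p by (intro mult_left_mono) auto
    then show "2 * hmax * coeff_bound * p * ?n \<le> 1/4" using trap_radius(3) by simp
  qed auto
  finally show ?thesis by simp
qed

lemma V_along_perturbed_has_derivative: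
  assumes x: "(x has_vector_derivative perturbed_field t (x t)) (at t within S)"
    and "t \<ge> 0" "norm (x t) \<le> trap_radius"
  shows "\<exists>D. ((\<lambda>s. V s (x s)) has_real_derivative D) (at t within S) \<and> D \<le> - (norm (x t))\<^sup>2 / 4"
  using V_has_derivative_along[OF x[unfolded perturbed_field_eq]] V_derivative_perturbed_le assms(2,3)
  by blast

end

context perturbed_system
begin

lemma solution_stays_in_ball:
  fixes x :: "real \<Rightarrow> real \<times> real"
  assumes t0: "t0 \<ge> 0" and b: "t0 \<le> b" and x_cont: "continuous_on {t0..b} x"
    and x_deriv: "\<And>t. t \<in> {t0..b} \<Longrightarrow> norm (x t) < trap_radius \<Longrightarrow>
                   (x has_vector_derivative perturbed_field t (x t)) (at t within {t0..b})"
    and m: "m > 0" and V_ge: "\<And>t z. V t z \<ge> m * (norm z)\<^sup>2"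
    and r: "0 < r" "r \<le> trap_radius"
    and start: "norm (x t0) < r" "V t0 (x t0) < m * r\<^sup>2"
  shows "\<forall>t\<in>{t0..b}. norm (x t) < r"
proof -
  have "\<forall>t\<in>{t0..b}. (norm (x t))\<^sup>2 < r\<^sup>2"
  proof (rule barrier_not_crossed[OF b V_along_continuous[OF x_cont] _ m])
    show "continuous_on {t0..b} (\<lambda>t. (norm (x t))\<^sup>2)" by (intro continuous_intros x_cont)
    show "\<And>t. t \<in> {t0..b} \<Longrightarrow> m * (norm (x t))\<^sup>2 \<le> V t (x t)" using V_ge by blast
    show "V t0 (x t0) < m * r\<^sup>2" by (fact start(2))
    show "(norm (x t0))\<^sup>2 < r\<^sup>2" using start(1) by (simp add: power_strict_mono)
    fix s assume s: "s \<in> {t0..b}" and inside: "\<forall>\<tau>\<in>{t0..s}. (norm (x \<tau>))\<^sup>2 < r\<^sup>2"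
    show "V s (x s) \<le> V t0 (x t0)"
    proof (rule DERIV_within_nonpos_imp_decreasing[where V="\<lambda>t. V t (x t)"])
      show "t0 \<le> s" using s by simp
      fix \<tau> assume \<tau>: "\<tau> \<in> {t0..s}"
      have "(norm (x \<tau>))\<^sup>2 < r\<^sup>2" using inside \<tau> by blast
      then have "norm (x \<tau>) < r" using r by (simp add: power_less_imp_less_base)
      then have "(x has_vector_derivative perturbed_field \<tau> (x \<tau>)) (at \<tau> within {t0..s})"
        using x_deriv[of \<tau>] \<tau> s r by (auto intro: has_vector_derivative_within_subset)
      moreover have "\<tau> \<ge> 0" "norm (x \<tau>) \<le> trap_radius" using \<tau> t0 \<open>norm (x \<tau>) < r\<close> r by auto
      ultimately obtain D where "((\<lambda>t. V t (x t)) has_real_derivative D) (at \<tau> within {t0..s})"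
        and "D \<le> - (norm (x \<tau>))\<^sup>2 / 4"
        using V_along_perturbed_has_derivative by blast
      moreover have "- (norm (x \<tau>))\<^sup>2 / 4 \<le> 0" by simp
      ultimately show "\<exists>D. ((\<lambda>t. V t (x t)) has_real_derivative D) (at \<tau> within {t0..s}) \<and> D \<le> 0"
        by (meson order_trans)
    qed
  qed
  then show ?thesis using r by (auto simp: power_less_imp_less_base)
qed

lemma solution_trapped:
  assumes t0: "t0 \<ge> 0" and m: "m > 0" and V_ge: "\<And>t z. V t z \<ge> m * (norm z)\<^sup>2"
    and r: "0 < r" "r \<le> trap_radius" and \<delta>: "\<delta> \<le> r" "hmax * \<delta>\<^sup>2 < m * r\<^sup>2"
    and sol: "is_solution_on perturbed_field {t0..b} x" and start: "norm (x t0) < \<delta>"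
  shows "\<forall>t\<in>{t0..b}. norm (x t) < r"
proof (cases "t0 \<le> b")
  case True
  show ?thesis
  proof (rule solution_stays_in_ball[OF t0 True is_solution_on_continuous[OF sol] _ m V_ge r])
    show "\<And>t. t \<in> {t0..b} \<Longrightarrow> (x has_vector_derivative perturbed_field t (x t)) (at t within {t0..b})"
      using sol unfolding is_solution_on_def by blast
    show "norm (x t0) < r" using start \<delta> by simp
    have "V t0 (x t0) \<le> hmax * (norm (x t0))\<^sup>2" using abs_V_le[of t0 "x t0"] by simp
    also have "\<dots> \<le> hmax * \<delta>\<^sup>2" using start hmax_pos by (intro mult_left_mono power_mono) auto
    finally show "V t0 (x t0) < m * r\<^sup>2" using \<delta> by simp
  qed
qed simp

lemma V_exponential_decay:
  assumes t0: "t0 \<ge> 0" and sol: "is_solution_on perturbed_field {t0..} x"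
    and small: "\<And>t. t \<ge> t0 \<Longrightarrow> norm (x t) \<le> trap_radius" and t: "t \<ge> t0"
  shows "V t (x t) \<le> V t0 (x t0) * exp (- (1 / (4 * hmax)) * (t - t0))"
proof -
  define c where "c = 1 / (4 * hmax)"
  have c: "c > 0" using hmax_pos by (simp add: c_def)
  let ?W = "\<lambda>s. V s (x s) * exp (c * (s - t0))"
  have "?W t \<le> ?W t0"
  proof (rule DERIV_within_nonpos_imp_decreasing[OF t])
    fix s assume s: "s \<in> {t0..t}"
    have "(x has_vector_derivative perturbed_field s (x s)) (at s within {t0..t})"
      using is_solution_on_subset[OF sol, of "{t0..t}"] s unfolding is_solution_on_def by auto
    then obtain D where dV: "((\<lambda>s. V s (x s)) has_real_derivative D) (at s within {t0..t})"
      and D: "D \<le> - (norm (x s))\<^sup>2 / 4"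
      using V_along_perturbed_has_derivative s t0 small[of s] by force
    have dE: "((\<lambda>s. exp (c * (s - t0))) has_real_derivative exp (c * (s - t0)) * (c * (1 - 0)))
               (at s within {t0..t})"
      by (intro DERIV_chain2[OF DERIV_exp] DERIV_cmult DERIV_diff DERIV_ident DERIV_const)
    have "c * V s (x s) \<le> (norm (x s))\<^sup>2 / 4"
      using abs_V_le[of s "x s"] c hmax_pos by (simp add: c_def field_simps)
    then have "exp (c * (s - t0)) * (D + c * V s (x s)) \<le> exp (c * (s - t0)) * 0"
      using D by (intro mult_left_mono) auto
    then show "\<exists>D. (?W has_real_derivative D) (at s within {t0..t}) \<and> D \<le> 0"
      using DERIV_mult[OF dV dE] by (intro exI conjI) (auto simp: algebra_simps)
  qed
  then have "V t (x t) * exp (c * (t - t0)) \<le> V t0 (x t0)" by simp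
  then show ?thesis unfolding c_def by (simp add: exp_minus field_simps)
qed


text \<open>Outside the box the state is frozen, so this field is globally Lipschitz and bounded;
  it agrees with the perturbed field on the ball of radius trap_radius.\<close>

definition "clamped_field t z =
  perturbed_field t (clamp (- trap_radius, - trap_radius) (trap_radius, trap_radius) z)"

lemma mem_trap_box:
  "z \<in> cbox (- r, - r) (r, r) \<longleftrightarrow> \<bar>fst z\<bar> \<le> r \<and> \<bar>snd z\<bar> \<le> r" for r :: real
  by (cases z) (auto simp: cbox_interval abs_le_iff)

lemma clamped_field_eq: "norm z \<le> trap_radius \<Longrightarrow> clamped_field t z = perturbed_field t z"
  using abs_fst_le_norm[of z] abs_snd_le_norm[of z]
  by (simp add: clamped_field_def clamp_cancel_cbox mem_trap_box)

lemma perturbed_field_Lipschitz_bounded_on_box: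
  obtains K B where "K > 0" "B \<ge> 0"
    "\<And>t z w. t \<ge> 0 \<Longrightarrow> \<bar>fst z\<bar> \<le> trap_radius \<Longrightarrow> \<bar>snd z\<bar> \<le> trap_radius \<Longrightarrow>
       \<bar>fst w\<bar> \<le> trap_radius \<Longrightarrow> norm (perturbed_field t z) \<le> B \<and>
       norm (perturbed_field t z - perturbed_field t w) \<le> K * norm (z - w)"
proof -
  let ?r = trap_radius and ?G = coeff_bound
  have f_diff: "f differentiable (at x)" for x using f_smooth[of 0 x] by simp
  have "continuous_on UNIV (deriv f)"
    using f_smooth[of 1] by (simp add: continuous_at_imp_continuous_on differentiable_imp_continuous_within)
  then obtain L where L: "L \<ge> 0" "\<And>a b. \<bar>a\<bar> \<le> ?r \<Longrightarrow> \<bar>b\<bar> \<le> ?r \<Longrightarrow> \<bar>f a - f b\<bar> \<le> L * \<bar>a - b\<bar>"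
    using C1_Lipschitz_on_interval[OF f_diff] by blast
  define A where "A = (\<alpha> + \<Delta>\<alpha>) * \<mu>"
  define K where "K = 1 + \<bar>A\<bar> + ?G * L"
  define B where "B = ?r + \<bar>A\<bar> * ?r + ?G * (\<bar>f 0\<bar> + L * ?r)"
  have field: "perturbed_field t z = (snd z, - A * snd z - perturbed_coeff t * f (fst z))" for t z
    by (simp add: second_order_sys_def A_def)
  have main: "norm (perturbed_field t z) \<le> B \<and> norm (perturbed_field t z - perturbed_field t w) \<le> K * norm (z - w)"
    if t: "t \<ge> 0" and z: "\<bar>fst z\<bar> \<le> ?r" "\<bar>snd z\<bar> \<le> ?r" and w: "\<bar>fst w\<bar> \<le> ?r" for t z w
  proof
    have g: "\<bar>perturbed_coeff t\<bar> \<le> ?G" by (rule coeff_bound(2)[OF t])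
    have "\<bar>f (fst z) - f 0\<bar> \<le> L * \<bar>fst z\<bar>" using L(2)[OF z(1), of 0] trap_radius(1) by simp
    also have "\<dots> \<le> L * ?r" using z(1) L(1) by (rule mult_left_mono)
    finally have "\<bar>f (fst z)\<bar> \<le> \<bar>f 0\<bar> + L * ?r" by linarith
    then have "\<bar>perturbed_coeff t * f (fst z)\<bar> \<le> ?G * (\<bar>f 0\<bar> + L * ?r)"
      unfolding abs_mult using g by (intro mult_mono) auto
    moreover have "\<bar>A * snd z\<bar> \<le> \<bar>A\<bar> * ?r" unfolding abs_mult using z(2) by (rule mult_left_mono) simp
    ultimately have "\<bar>- A * snd z - perturbed_coeff t * f (fst z)\<bar> \<le> \<bar>A\<bar> * ?r + ?G * (\<bar>f 0\<bar> + L * ?r)"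
      by linarith
    then show "norm (perturbed_field t z) \<le> B"
      using norm_Pair_le_abs_add[of "snd z" "- A * snd z - perturbed_coeff t * f (fst z)"] z(2)
      unfolding field B_def by linarith
    have yv: "\<bar>fst z - fst w\<bar> \<le> norm (z - w)" "\<bar>snd z - snd w\<bar> \<le> norm (z - w)"
      using abs_fst_le_norm[of "z - w"] abs_snd_le_norm[of "z - w"] by auto
    have "\<bar>f (fst z) - f (fst w)\<bar> \<le> L * norm (z - w)"
      using L(2)[OF z(1) w] mult_left_mono[OF yv(1) L(1)] by linarith
    then have "\<bar>perturbed_coeff t * (f (fst z) - f (fst w))\<bar> \<le> ?G * (L * norm (z - w))"
      unfolding abs_mult using g by (intro mult_mono) auto
    moreover have "\<bar>A * (snd z - snd w)\<bar> \<le> \<bar>A\<bar> * norm (z - w)"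
      unfolding abs_mult using yv(2) by (rule mult_left_mono) simp
    moreover have "(- A * snd z - perturbed_coeff t * f (fst z)) - (- A * snd w - perturbed_coeff t * f (fst w))
        = - (A * (snd z - snd w)) - perturbed_coeff t * (f (fst z) - f (fst w))"
      by (simp add: algebra_simps)
    moreover have "\<bar>- (A * (snd z - snd w)) - perturbed_coeff t * (f (fst z) - f (fst w))\<bar>
        \<le> \<bar>A * (snd z - snd w)\<bar> + \<bar>perturbed_coeff t * (f (fst z) - f (fst w))\<bar>"
      using abs_triangle_ineq4[of "- (A * (snd z - snd w))"] by simp
    ultimately have "\<bar>(- A * snd z - perturbed_coeff t * f (fst z)) - (- A * snd w - perturbed_coeff t * f (fst w))\<bar>
        \<le> \<bar>A\<bar> * norm (z - w) + ?G * (L * norm (z - w))"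
      by linarith
    moreover have "norm (perturbed_field t z - perturbed_field t w)
        \<le> \<bar>snd z - snd w\<bar> + \<bar>(- A * snd z - perturbed_coeff t * f (fst z)) - (- A * snd w - perturbed_coeff t * f (fst w))\<bar>"
      unfolding field by (simp add: norm_Pair_le_abs_add)
    moreover have "K * norm (z - w) = norm (z - w) + \<bar>A\<bar> * norm (z - w) + ?G * (L * norm (z - w))"
      by (simp add: K_def algebra_simps)
    ultimately show "norm (perturbed_field t z - perturbed_field t w) \<le> K * norm (z - w)"
      using yv(2) by linarith
  qed
  have "K > 0" "B \<ge> 0"
    using coeff_bound(1) L(1) trap_radius(1) by (simp_all add: K_def B_def add_pos_nonneg)
  then show thesis using main by (rule that)
qed

lemma clamped_field_bounded_Lipschitz:
  assumes t0: "t0 \<ge> 0"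
  shows "\<exists>K B. bounded_Lipschitz_field clamped_field t0 K B"
proof -
  let ?c = "clamp (- trap_radius, - trap_radius) (trap_radius, trap_radius)"
  obtain K B where K: "K > 0" and B: "B \<ge> 0"
    and field: "\<And>t z w. t \<ge> 0 \<Longrightarrow> \<bar>fst z\<bar> \<le> trap_radius \<Longrightarrow> \<bar>snd z\<bar> \<le> trap_radius \<Longrightarrow>
       \<bar>fst w\<bar> \<le> trap_radius \<Longrightarrow> norm (perturbed_field t z) \<le> B \<and>
       norm (perturbed_field t z - perturbed_field t w) \<le> K * norm (z - w)"
    using perturbed_field_Lipschitz_bounded_on_box by metis
  have "?c z \<in> cbox (- trap_radius, - trap_radius) (trap_radius, trap_radius)" for z
    using trap_radius(1) by (intro clamp_in_interval) (auto simp: Basis_prod_def)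
  then have in_box: "\<bar>fst (?c z)\<bar> \<le> trap_radius" "\<bar>snd (?c z)\<bar> \<le> trap_radius" for z
    unfolding mem_trap_box by auto
  have "bounded_Lipschitz_field clamped_field t0 K B"
  proof
    show "continuous_on {t0..} (\<lambda>t. clamped_field t z)" for z
      unfolding clamped_field_def second_order_sys_def perturbed_coeff_def
      by (intro continuous_intros continuous_on_subset[OF \<phi>_cont] continuous_on_subset[OF \<Delta>\<phi>_cont])
        (use t0 in auto)
    fix t z w assume "t0 \<le> t"
    then have t: "t \<ge> 0" using t0 by simp
    show "norm (clamped_field t z) \<le> B"
      using field[OF t in_box in_box(1)] unfolding clamped_field_def by blast
    have "norm (clamped_field t z - clamped_field t w) \<le> K * norm (?c z - ?c w)"
      using field[OF t in_box in_box(1)] unfolding clamped_field_def by blast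
    also have "\<dots> \<le> K * norm (z - w)"
      using dist_clamps_le_dist_args[of _ _ z w] K by (simp add: dist_norm)
    finally show "norm (clamped_field t z - clamped_field t w) \<le> K * norm (z - w)" .
  qed (use K B in auto)
  then show ?thesis by blast
qed

lemma perturbed_solution_exists:
  assumes t0: "t0 \<ge> 0" and m: "m > 0" and V_ge: "\<And>t z. V t z \<ge> m * (norm z)\<^sup>2"
    and r: "0 < r" "r \<le> trap_radius" and start: "norm x0 < r" "V t0 x0 < m * r\<^sup>2"
  shows "\<exists>x. is_solution_on perturbed_field {t0..} x \<and> x t0 = x0"
proof -
  obtain x where sol: "is_solution_on clamped_field {t0..} x" and x0: "x t0 = x0"
    using clamped_field_bounded_Lipschitz[OF t0] bounded_Lipschitz_field_has_solution by blast
  have inside: "norm (x t) < r" if t: "t \<ge> t0" for t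
  proof -
    have "\<forall>s\<in>{t0..t}. norm (x s) < r"
    proof (rule solution_stays_in_ball[OF t0 t _ _ m V_ge r])
      show "continuous_on {t0..t} x"
        using is_solution_on_continuous[OF is_solution_on_subset[OF sol]] by auto
      fix s assume s: "s \<in> {t0..t}" "norm (x s) < trap_radius"
      have "(x has_vector_derivative clamped_field s (x s)) (at s within {t0..t})"
        using is_solution_on_subset[OF sol, of "{t0..t}"] s(1) unfolding is_solution_on_def by auto
      then show "(x has_vector_derivative perturbed_field s (x s)) (at s within {t0..t})"
        using clamped_field_eq[of "x s" s] s(2) by simp
    qed (use start x0 in auto)
    then show ?thesis using t by auto
  qed
  have "is_solution_on perturbed_field {t0..} x"
    unfolding is_solution_on_def
  proof
    fix t assume t: "t \<in> {t0..}"
    then have "norm (x t) \<le> trap_radius" using inside[of t] r by simp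
    moreover have "(x has_vector_derivative clamped_field t (x t)) (at t within {t0..})"
      using sol t unfolding is_solution_on_def by blast
    ultimately show "(x has_vector_derivative perturbed_field t (x t)) (at t within {t0..})"
      using clamped_field_eq[of "x t" t] by simp
  qed
  then show ?thesis using x0 by blast
qed


lemma perturbed_lyap_stable: "lyap_stable perturbed_field"
  unfolding lyap_stable_def
proof (intro allI impI)
  fix \<epsilon> t0 :: real assume \<epsilon>: "\<epsilon> > 0" and t0: "t0 \<ge> 0"
  obtain m where m: "m > 0" and V_ge: "\<And>t z. V t z \<ge> m * (norm z)\<^sup>2" using V_coercive by blast
  define r where "r = min \<epsilon> trap_radius"
  have r: "0 < r" "r \<le> trap_radius" "r \<le> \<epsilon>" using \<epsilon> trap_radius by (auto simp: r_def)
  obtain \<delta> where "\<delta> > 0" and \<delta>: "\<delta> \<le> r" "hmax * \<delta>\<^sup>2 < m * r\<^sup>2"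
    using exists_radius_quadratic_below[OF m hmax_pos r(1)] by blast
  have "(\<exists>x. is_solution_on perturbed_field {t0..} x \<and> x t0 = x0) \<and>
        (\<forall>b x. t0 \<le> b \<longrightarrow> is_solution_on perturbed_field {t0..b} x \<longrightarrow> x t0 = x0 \<longrightarrow>
               (\<forall>t\<in>{t0..b}. norm (x t) < \<epsilon>))" if x0: "norm x0 < \<delta>" for x0
  proof (intro conjI allI impI)
    show "\<exists>x. is_solution_on perturbed_field {t0..} x \<and> x t0 = x0"
    proof (rule perturbed_solution_exists[OF t0 m V_ge r(1,2)])
      show "norm x0 < r" using x0 \<delta> by simp
      have "V t0 x0 \<le> hmax * (norm x0)\<^sup>2" using abs_V_le[of t0 x0] by simp
      also have "\<dots> \<le> hmax * \<delta>\<^sup>2" using x0 hmax_pos by (intro mult_left_mono power_mono) auto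
      finally show "V t0 x0 < m * r\<^sup>2" using \<delta> by simp
    qed
    fix b x assume "is_solution_on perturbed_field {t0..b} x" "x t0 = x0"
    then have "\<forall>t\<in>{t0..b}. norm (x t) < r"
      using solution_trapped[OF t0 m V_ge r(1,2) \<delta>] x0 by blast
    then show "\<forall>t\<in>{t0..b}. norm (x t) < \<epsilon>" using r by force
  qed
  then show "\<exists>\<delta>>0. \<forall>x0. norm x0 < \<delta> \<longrightarrow>
        (\<exists>x. is_solution_on perturbed_field {t0..} x \<and> x t0 = x0) \<and>
        (\<forall>b x. t0 \<le> b \<longrightarrow> is_solution_on perturbed_field {t0..b} x \<longrightarrow> x t0 = x0 \<longrightarrow>
               (\<forall>t\<in>{t0..b}. norm (x t) < \<epsilon>))"
    using \<open>\<delta> > 0\<close> by blast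
qed

lemma perturbed_lyap_attractive: "lyap_attractive perturbed_field"
  unfolding lyap_attractive_def
proof (intro allI impI)
  fix t0 :: real assume t0: "t0 \<ge> 0"
  obtain m where m: "m > 0" and V_ge: "\<And>t z. V t z \<ge> m * (norm z)\<^sup>2" using V_coercive by blast
  obtain \<delta> where "\<delta> > 0" and \<delta>: "\<delta> \<le> trap_radius" "hmax * \<delta>\<^sup>2 < m * trap_radius\<^sup>2"
    using exists_radius_quadratic_below[OF m hmax_pos trap_radius(1)] by blast
  have "(x \<longlongrightarrow> 0) at_top" if sol: "is_solution_on perturbed_field {t0..} x" and x0: "norm (x t0) < \<delta>" for x
  proof (rule tendsto_zero_of_exponential_bound)
    show "1 / (4 * hmax) > 0" using hmax_pos by simp
    have small: "norm (x t) \<le> trap_radius" if "t \<ge> t0" for t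
    proof -
      have "is_solution_on perturbed_field {t0..t} x" by (rule is_solution_on_subset[OF sol]) auto
      from solution_trapped[OF t0 m V_ge trap_radius(1) order_refl \<delta> this x0]
      have "norm (x t) < trap_radius" using that by simp
      then show ?thesis by simp
    qed
    fix t assume t: "t \<ge> t0"
    have "m * (norm (x t))\<^sup>2 \<le> V t0 (x t0) * exp (- (1 / (4 * hmax)) * (t - t0))"
      using V_ge[of "x t" t] V_exponential_decay[OF t0 sol small t] by linarith
    then show "(norm (x t))\<^sup>2 \<le> V t0 (x t0) / m * exp (- (1 / (4 * hmax)) * (t - t0))"
      using m by (simp add: field_simps)
  qed
  then show "\<exists>\<delta>>0. \<forall>x. is_solution_on perturbed_field {t0..} x \<longrightarrow> norm (x t0) < \<delta> \<longrightarrow> (x \<longlongrightarrow> 0) at_top"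
    using \<open>\<delta> > 0\<close> by blast
qed

end

theorem mainTheorem8:
  fixes T \<alpha> \<beta> \<mu>0 \<mu> p \<rho> \<Delta>\<alpha> \<Delta>\<beta> :: real
    and \<phi> f \<Delta>\<phi> :: "real \<Rightarrow> real"
    and H :: "real \<Rightarrow> complex^2^2"
  assumes T: "T > 0" and \<alpha>: "\<alpha> > 0" and \<beta>: "\<beta> > 0"
    and \<phi>_cont: "continuous_on UNIV \<phi>"
    and \<phi>_per: "\<And>t. \<phi> (t + T) = \<phi> t"
    and \<phi>_mean: "integral {0..T} \<phi> = 0"
    and f_smooth: "\<And>n x. ((deriv ^^ n) f) differentiable (at x)"
    and f0: "f 0 = 0" and f'0: "deriv f 0 < 0"
    and cond: "(1 / T) * integral {0..T} (\<lambda>\<tau>. (integral {0..\<tau>} (\<lambda>s. \<phi> s * deriv f 0))\<^sup>2)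
               > ((1 / T) * integral {0..T} (\<lambda>\<tau>. \<tau> * (\<phi> \<tau> * deriv f 0)))\<^sup>2 - \<beta> * deriv f 0"
    and \<mu>0: "\<mu>0 > 0"
    and lin_stable: "\<And>\<nu>. 0 < \<nu> \<Longrightarrow> \<nu> \<le> \<mu>0 \<Longrightarrow>
        asymp_stable (second_order_sys (\<alpha> * \<nu>)
           (\<lambda>t. \<beta> * deriv f 0 * \<nu>^2 + \<nu> * (\<phi> t * deriv f 0)) (\<lambda>y. y))"
    and \<mu>: "0 < \<mu>" "\<mu> \<le> \<mu>0"
    and H_herm: "\<And>t. t \<in> {0..T} \<Longrightarrow> hermitian2 (H t)"
    and H_ode: "\<And>t. t \<in> {0..T} \<Longrightarrow>
        (H has_vector_derivative
           (- mat 1 - H t ** Atilde \<alpha> (\<beta> * deriv f 0) (\<lambda>s. \<phi> s * deriv f 0) \<mu> t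
            - adjoint2 (Atilde \<alpha> (\<beta> * deriv f 0) (\<lambda>s. \<phi> s * deriv f 0) \<mu> t) ** H t))
        (at t within {0..T})"
    and H_per: "H 0 = H T" and H_pos: "posdef2 (H 0)"
    and \<Delta>\<phi>_cont: "continuous_on {0..} \<Delta>\<phi>" and \<Delta>\<phi>_bdd: "bounded (\<Delta>\<phi> ` {0..})"
    and p: "p \<ge> 0" and \<rho>: "\<rho> > 0"
    and f_quad: "\<And>\<xi>. \<bar>\<xi>\<bar> \<le> \<rho> \<Longrightarrow> \<bar>f \<xi> - deriv f 0 * \<xi>\<bar> \<le> p * \<xi>\<^sup>2"
    and small1: "\<mu> * (SUP t\<in>{0..}. \<bar>\<Delta>\<phi> t * deriv f 0\<bar>)
                   < 1 / (8 * (SUP t\<in>{0..T}. spec_norm (H t)))"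
    and small2: "\<mu> * (\<bar>\<Delta>\<beta> * deriv f 0\<bar> * \<mu> + \<bar>\<Delta>\<alpha>\<bar>)
                   < 1 / (8 * (SUP t\<in>{0..T}. spec_norm (H t)))"
  shows "asymp_stable (second_order_sys ((\<alpha> + \<Delta>\<alpha>) * \<mu>)
           (\<lambda>t. (\<beta> + \<Delta>\<beta>) * \<mu>^2 + \<mu> * (\<phi> t + \<Delta>\<phi> t)) f)"
proof -
  interpret perturbed_system T \<alpha> \<beta> \<mu> \<phi> f H p \<rho> \<Delta>\<alpha> \<Delta>\<beta> \<Delta>\<phi>
  proof unfold_locales
    show "asymp_stable (second_order_sys (\<alpha> * \<mu>) (\<lambda>t. \<beta> * deriv f 0 * \<mu>^2 + \<mu> * (\<phi> t * deriv f 0)) (\<lambda>y. y))"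
      using lin_stable \<mu> by blast
  qed (use assms in auto)
  have "perturbed_coeff = (\<lambda>t. (\<beta> + \<Delta>\<beta>) * \<mu>^2 + \<mu> * (\<phi> t + \<Delta>\<phi> t))"
    by (simp add: fun_eq_iff perturbed_coeff_def)
  then show ?thesis
    using perturbed_lyap_stable perturbed_lyap_attractive by (simp add: asymp_stable_def)
qed

end
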